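(* There is a constant $c>0$ independent of $h$ such that for all $u_{h,1},u_{h,2}\in\mathcal S^{3,1}(\mathcal T_h)^d$ with $u_{h,1}-u_{h,2}\in\mathcal S^{3,1}_D(\mathcal T_h)^d$, all $\lambda_{h,1},\lambda_{h,2}\in\mathcal S^{2,0}_0(\mathcal T_h)$ and all $(v_h,\mu_h),(w_h,\eta_h)\in X_h$, $$\big|(DF_h(u_{h,1},\lambda_{h,1})-DF_h(u_{h,2},\lambda_{h,2}))[(v_h,\mu_h),(w_h,\eta_h)]\big|\le c\big(\|u_{h,1}-u_{h,2}\|_{H^2(I)^d}+\|\lambda_{h,1}-\lambda_{h,2}\|_{H^{-1}}\big)\|(v_h,\mu_h)\|_{X_h}\|(w_h,\eta_h)\|_{X_h}.$$
   Context: Mesh notation: $I=(a,b)\subset\mathbb R$, $a=x_0<x_1<\dots<x_M=b$, $I_i=[x_{i-1},x_i]$, $h_i=x_i-x_{i-1}$, $h=\max_i h_i$, $\mathcal T_h=\{I_1,\dots,I_M\}$. The meshes are quasi-uniform: there is $c>0$ independent of $h$ with $h\le c\,h_i$ for all $i$. Let $m_i=(x_{i-1}+x_i)/2$, $\mathcal N_1(\mathcal T_h)=\{x_0,\dots,x_M\}$, $\mathcal N_2(\mathcal T_h)=\mathcal N_1(\mathcal T_h)\cup\{m_1,\dots,m_M\}$. For $k\ge1$, $l\in\{0,1\}$, $\mathcal S^{k,l}(\mathcal T_h)=\{v\in C^l(\bar I): v|_{I_i}\in\mathcal P_k\ \forall i\}$. $\mathcal I_{h,2}$ is the nodal interpolant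 into $\mathcal S^{2,0}(\mathcal T_h)$ at $\mathcal N_2(\mathcal T_h)$ (componentwise); $(u,v)_{h,2}=\int_I\mathcal I_{h,2}(u\cdot v)\,dx$; $(\cdot,\cdot)$ is the $L^2(I)$ inner product. Problem notation: $H^2_D(I)=\{v\in H^2(I):v(a)=0,\ v'(a)=v'(b)=0\}$, $H^1_0(I)=\{v\in H^1(I): v(a)=v(b)=0\}$, $H^{-1}(I)=H^1_0(I)'$ with $\|\mu\|_{H^{-1}}=\sup\{\int_I\mu\phi\,dx:\phi\in H^1_0(I),\|\phi\|_{H^1}=1\}$ for $\mu\in L^2(I)$. $\mathcal S^{3,1}_D(\mathcal T_h)=\mathcal S^{3,1}(\mathcal T_h)\cap H^2_D(I)$, $\mathcal S^{2,0}_0(\mathcal T_h)=\mathcal S^{2,0}(\mathcal T_h)\cap H^1_0(I)$, $X_h=\mathcal S^{3,1}_D(\mathcal T_h)^d\times\mathcal S^{2,0}_0(\mathcal T_h)$ with norm $\|(v_h,\mu_h)\|_{X_h}=\|v_h\|_{H^2(I)^d}+\|\mu_h\|_{H^{-1}}$. Discrete forms: $a_{\lambda_h}(v_h,w_h)=(v_h'',w_h'')+(\lambda_h,v_h'\cdot w_h')_{h,2}$, $b_{u_h}(v_h,\eta_h)=(\eta_h,u_h'\cdot v_h')_{h,2}$, and the derivative of the discrete Lagrangian system is the bilinear form $$DF_h(u_h,\lambda_h)[(v_h,\mu_h),(w_h,\eta_h)]=a_{\lambda_h}(v_h,w_h)+b_{u_h}(w_h,\mu_h)+b_{u_h}(v_h,\eta_h).$$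 *)

theory Defs
  imports "HOL-Analysis.Analysis" "HOL-Computational_Algebra.Polynomial"
begin

definition is_mesh :: "real \<Rightarrow> real \<Rightarrow> nat \<Rightarrow> (nat \<Rightarrow> real) \<Rightarrow> bool" where
  "is_mesh a b M x \<longleftrightarrow> a < b \<and> 1 \<le> M \<and> x 0 = a \<and> x M = b \<and> (\<forall>i\<in>{1..M}. x (i - 1) < x i)"

definition meshsize :: "nat \<Rightarrow> (nat \<Rightarrow> real) \<Rightarrow> real" where
  "meshsize M x = Max ((\<lambda>i. x i - x (i - 1)) ` {1..M})"

definition quasi_uniform :: "real \<Rightarrow> nat \<Rightarrow> (nat \<Rightarrow> real) \<Rightarrow> bool" where
  "quasi_uniform c0 M x \<longleftrightarrow> (\<forall>i\<in>{1..M}. meshsize M x \<le> c0 * (x i - x (i - 1)))"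

definition Dv :: "real \<Rightarrow> real \<Rightarrow> (real \<Rightarrow> real) \<Rightarrow> real \<Rightarrow> real" where
  "Dv a b f t = vector_derivative f (at t within {a..b})"

definition C1_on :: "real \<Rightarrow> real \<Rightarrow> (real \<Rightarrow> real) \<Rightarrow> bool" where
  "C1_on a b v \<longleftrightarrow> (\<exists>D. (\<forall>t\<in>{a..b}. (v has_real_derivative D t) (at t within {a..b}))
                      \<and> continuous_on {a..b} D)"

definition pw_poly :: "nat \<Rightarrow> nat \<Rightarrow> (nat \<Rightarrow> real) \<Rightarrow> (real \<Rightarrow> real) \<Rightarrow> bool" where
  "pw_poly k M x v \<longleftrightarrow>
     (\<forall>i\<in>{1..M}. \<exists>p :: real poly. degree p \<le> k \<and> (\<forall>t\<in>{x (i - 1)..x i}. v t = poly p t))"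

text \<open>S^{k,l}(T_h) for l \<in> {0,1} (scalar functions; vector functions componentwise).\<close>
definition spline :: "nat \<Rightarrow> nat \<Rightarrow> nat \<Rightarrow> (nat \<Rightarrow> real) \<Rightarrow> (real \<Rightarrow> real) \<Rightarrow> bool" where
  "spline k l M x v \<longleftrightarrow>
     (if l = 0 then continuous_on {x 0..x M} v else C1_on (x 0) (x M) v) \<and> pw_poly k M x v"

definition S31D :: "nat \<Rightarrow> (nat \<Rightarrow> real) \<Rightarrow> (real \<Rightarrow> real) \<Rightarrow> bool" where
  "S31D M x v \<longleftrightarrow> spline 3 1 M x v \<and> v (x 0) = 0
      \<and> Dv (x 0) (x M) v (x 0) = 0 \<and> Dv (x 0) (x M) v (x M) = 0"

definition S20_0 :: "nat \<Rightarrow> (nat \<Rightarrow> real) \<Rightarrow> (real \<Rightarrow> real) \<Rightarrow> bool" where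
  "S20_0 M x v \<longleftrightarrow> spline 2 0 M x v \<and> v (x 0) = 0 \<and> v (x M) = 0"

text \<open>H^2(I)^d norm (weak derivatives coincide a.e. with classical ones for splines).\<close>
definition H2norm :: "real \<Rightarrow> real \<Rightarrow> ('d::finite \<Rightarrow> real \<Rightarrow> real) \<Rightarrow> real" where
  "H2norm a b v = sqrt (\<Sum>k\<in>UNIV. integral {a..b}
      (\<lambda>t. (v k t)\<^sup>2 + (Dv a b (v k) t)\<^sup>2 + (Dv a b (Dv a b (v k)) t)\<^sup>2))"

text \<open>H^1_0(I): absolutely continuous phi with weak derivative g \<in> L^2(I), phi(a) = phi(b) = 0.\<close>
definition is_H10 :: "real \<Rightarrow> real \<Rightarrow> (real \<Rightarrow> real) \<Rightarrow> (real \<Rightarrow> real) \<Rightarrow> bool" where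
  "is_H10 a b phi g \<longleftrightarrow> g absolutely_integrable_on {a..b} \<and> (\<lambda>t. (g t)\<^sup>2) integrable_on {a..b}
      \<and> (\<forall>t\<in>{a..b}. phi t = integral {a..t} g) \<and> phi b = 0"

definition H1norm_w :: "real \<Rightarrow> real \<Rightarrow> (real \<Rightarrow> real) \<Rightarrow> (real \<Rightarrow> real) \<Rightarrow> real" where
  "H1norm_w a b phi g = sqrt (integral {a..b} (\<lambda>t. (phi t)\<^sup>2 + (g t)\<^sup>2))"

definition Hm1norm :: "real \<Rightarrow> real \<Rightarrow> (real \<Rightarrow> real) \<Rightarrow> real" where
  "Hm1norm a b mu = Sup {integral {a..b} (\<lambda>t. mu t * phi t) | phi g.
       is_H10 a b phi g \<and> H1norm_w a b phi g = 1}"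

definition Xnorm :: "real \<Rightarrow> real \<Rightarrow> ('d::finite \<Rightarrow> real \<Rightarrow> real) \<Rightarrow> (real \<Rightarrow> real) \<Rightarrow> real" where
  "Xnorm a b v mu = H2norm a b v + Hm1norm a b mu"

definition quad_interp :: "real \<Rightarrow> real \<Rightarrow> (real \<Rightarrow> real) \<Rightarrow> real \<Rightarrow> real" where
  "quad_interp x0 x1 f t = (let m = (x0 + x1) / 2 in
       f x0 * ((t - m) * (t - x1)) / ((x0 - m) * (x0 - x1))
     + f m * ((t - x0) * (t - x1)) / ((m - x0) * (m - x1))
     + f x1 * ((t - x0) * (t - m)) / ((x1 - x0) * (x1 - m)))"

definition elem :: "nat \<Rightarrow> (nat \<Rightarrow> real) \<Rightarrow> real \<Rightarrow> nat" where
  "elem M x t = (LEAST i. 1 \<le> i \<and> i \<le> M \<and> t \<le> x i)"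

definition interp2 :: "nat \<Rightarrow> (nat \<Rightarrow> real) \<Rightarrow> (real \<Rightarrow> real) \<Rightarrow> real \<Rightarrow> real" where
  "interp2 M x f t = (let i = elem M x t in quad_interp (x (i - 1)) (x i) f t)"

definition dip :: "nat \<Rightarrow> (nat \<Rightarrow> real) \<Rightarrow> (real \<Rightarrow> real) \<Rightarrow> (real \<Rightarrow> real) \<Rightarrow> real" where
  "dip M x f g = integral {x 0..x M} (interp2 M x (\<lambda>t. f t * g t))"

definition a_form :: "nat \<Rightarrow> (nat \<Rightarrow> real) \<Rightarrow> (real \<Rightarrow> real) \<Rightarrow> ('d::finite \<Rightarrow> real \<Rightarrow> real)
     \<Rightarrow> ('d \<Rightarrow> real \<Rightarrow> real) \<Rightarrow> real" where
  "a_form M x lam v w =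
     (\<Sum>k\<in>UNIV. integral {x 0..x M}
        (\<lambda>t. Dv (x 0) (x M) (Dv (x 0) (x M) (v k)) t * Dv (x 0) (x M) (Dv (x 0) (x M) (w k)) t))
     + dip M x lam (\<lambda>t. \<Sum>k\<in>UNIV. Dv (x 0) (x M) (v k) t * Dv (x 0) (x M) (w k) t)"

definition b_form :: "nat \<Rightarrow> (nat \<Rightarrow> real) \<Rightarrow> ('d::finite \<Rightarrow> real \<Rightarrow> real)
     \<Rightarrow> ('d \<Rightarrow> real \<Rightarrow> real) \<Rightarrow> (real \<Rightarrow> real) \<Rightarrow> real" where
  "b_form M x u v eta =
     dip M x eta (\<lambda>t. \<Sum>k\<in>UNIV. Dv (x 0) (x M) (u k) t * Dv (x 0) (x M) (v k) t)"

definition DF :: "nat \<Rightarrow> (nat \<Rightarrow> real) \<Rightarrow> ('d::finite \<Rightarrow> real \<Rightarrow> real) \<Rightarrow> (real \<Rightarrow> real)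
     \<Rightarrow> ('d \<Rightarrow> real \<Rightarrow> real) \<Rightarrow> (real \<Rightarrow> real) \<Rightarrow> ('d \<Rightarrow> real \<Rightarrow> real) \<Rightarrow> (real \<Rightarrow> real) \<Rightarrow> real" where
  "DF M x u lam v mu w eta = a_form M x lam v w + b_form M x u w mu + b_form M x u v eta"

end

theory Submission
  imports Defs
begin

(* The bending term (v'', w'') of a_lambda does not depend on (u, lambda), and every other term of DF_h
   is linear in (u, lambda). With e = u1 - u2 the difference therefore equals
     (lam1 - lam2, v'.w')_h + (mu, e'.w')_h + (eta, e'.v')_h,
   and it suffices to bound (nu, g)_h with g = p'.q' by c |p|_{H^2} |q|_{H^2} |nu|_{H^-1}, for nu in
   S^{2,0} and p, q in S^{3,1} whose derivatives vanish at a and b.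

   (nu, g)_h is Simpson's rule applied to nu g. On each element let phi be the quartic that agrees with g
   at the end points and whose moments against quadratics are those of Simpson's rule with the
   midpoint value of g. Then (nu, g)_h is the exact integral of nu phi, and phi is in H^1_0 because g
   vanishes at a and b, so |(nu, g)_h| <= |phi|_{H^1} |nu|_{H^-1}. The integral of phi'^2 over an element
   is bounded by the squared oscillation of g there divided by h_i, and by Cauchy-Schwarz this
   oscillation is at most h_i times the local H^2 energy of p times the global one of q, or vice versa.
   Summing over the elements and using the Poincare inequality gives |phi|_{H^1} <= c |p''| |q''|.
   No inverse estimate is used. *)

lemma integral_square_le:
  fixes f :: "real \<Rightarrow> real"
  assumes f: "f integrable_on {s..t}" and f2: "(\<lambda>x. (f x)\<^sup>2) integrable_on {s..t}" and "s \<le> t"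
  shows "(integral {s..t} f)\<^sup>2 \<le> (t - s) * integral {s..t} (\<lambda>x. (f x)\<^sup>2)"
proof (cases "s = t")
  case False
  then have L: "t - s > 0" using \<open>s \<le> t\<close> by simp
  define I J where "I = integral {s..t} f" and "J = integral {s..t} (\<lambda>x. (f x)\<^sup>2)"
  define m where "m = I / (t - s)"
  have const: "((\<lambda>x. m\<^sup>2) has_integral m\<^sup>2 * (t - s)) {s..t}"
    using has_integral_const_real[of "m\<^sup>2" s t] \<open>s \<le> t\<close> by (simp add: mult.commute)
  have "((\<lambda>x. (f x)\<^sup>2 - 2 * m * f x + m\<^sup>2) has_integral J - 2 * m * I + m\<^sup>2 * (t - s)) {s..t}"
    unfolding I_def J_def
    by (intro has_integral_add has_integral_diff has_integral_mult_right const integrable_integral f f2)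
  moreover have "(f x)\<^sup>2 - 2 * m * f x + m\<^sup>2 = (f x - m)\<^sup>2" for x
    by (simp add: power2_eq_square algebra_simps)
  ultimately have "((\<lambda>x. (f x - m)\<^sup>2) has_integral J - 2 * m * I + m\<^sup>2 * (t - s)) {s..t}"
    by simp
  then have "0 \<le> J - 2 * m * I + m\<^sup>2 * (t - s)"
    by (rule has_integral_nonneg) simp
  also have "\<dots> = J - I\<^sup>2 / (t - s)"
  proof -
    have "m\<^sup>2 * (t - s) = I\<^sup>2 / (t - s)" and "2 * m * I = 2 * (I\<^sup>2 / (t - s))"
      using L unfolding m_def by (simp_all add: power2_eq_square)
    then show ?thesis by simp
  qed
  finally show ?thesis using L unfolding I_def J_def by (simp add: field_simps)
qed simp

lemma integral_square_le_subinterval: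
  fixes f :: "real \<Rightarrow> real"
  assumes f: "f integrable_on {s..t}" and f2: "(\<lambda>x. (f x)\<^sup>2) integrable_on {c..d}"
    and "c \<le> s" "s \<le> t" "t \<le> d"
  shows "(integral {s..t} f)\<^sup>2 \<le> (d - c) * integral {c..d} (\<lambda>x. (f x)\<^sup>2)"
proof -
  have f2': "(\<lambda>x. (f x)\<^sup>2) integrable_on {s..t}"
    using integrable_subinterval_real[OF f2] assms by auto
  have "(integral {s..t} f)\<^sup>2 \<le> (t - s) * integral {s..t} (\<lambda>x. (f x)\<^sup>2)"
    using integral_square_le[OF f f2'] assms by simp
  also have "\<dots> \<le> (d - c) * integral {c..d} (\<lambda>x. (f x)\<^sup>2)"
  proof (rule mult_mono)
    show "integral {s..t} (\<lambda>x. (f x)\<^sup>2) \<le> integral {c..d} (\<lambda>x. (f x)\<^sup>2)"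
      using assms by (intro integral_subset_le f2 f2') auto
  qed (use assms integral_nonneg[OF f2'] in auto)
  finally show ?thesis .
qed

lemma has_integral_rescale_unit:
  fixes r :: "real \<Rightarrow> real"
  assumes r: "(r has_integral I) {0..1}" and h: "0 < h"
  shows "((\<lambda>t. r ((t - x0) / h)) has_integral h * I) {x0..x0 + h}"
proof -
  have "((\<lambda>t. r ((1 / h) *\<^sub>R t + - x0 / h)) has_integral I /\<^sub>R (1 / h) ^ DIM(real))
      (cbox ((0 - - x0 / h) /\<^sub>R (1 / h)) ((1 - - x0 / h) /\<^sub>R (1 / h)))"
    using r h by (intro has_integral_affinity') auto
  moreover have "(1 / h) *\<^sub>R t + - x0 / h = (t - x0) / h" for t
    by (simp add: diff_divide_distrib)
  moreover have "(0 - - x0 / h) /\<^sub>R (1 / h) = x0" "(1 - - x0 / h) /\<^sub>R (1 / h) = x0 + h"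
    using h by (simp_all add: field_simps)
  ultimately show ?thesis using h by (simp add: mult.commute)
qed

lemma has_integral_unit_by_antiderivative:
  fixes F f :: "real \<Rightarrow> real"
  assumes "\<And>y. (F has_real_derivative f y) (at y)"
  shows "(f has_integral F 1 - F 0) {0..1}"
  using assms by (intro fundamental_theorem_of_calculus)
    (auto simp: has_real_derivative_iff_has_vector_derivative[symmetric] intro: has_field_derivative_at_within)

lemma has_integral_eq_on_interior:
  fixes f F :: "real \<Rightarrow> real"
  assumes "continuous_on {c..d} F" "\<And>t. c < t \<Longrightarrow> t < d \<Longrightarrow> f t = F t"
  shows "(f has_integral integral {c..d} F) {c..d}"
  using integrable_continuous_interval[OF assms(1)]
  by (rule has_integral_spike_finite[of "{c, d}", rotated 2, OF integrable_integral]) (use assms(2) in auto)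

section \<open>The reference element\<close>

definition quad_ref :: "real \<Rightarrow> real \<Rightarrow> real \<Rightarrow> real \<Rightarrow> real" where
  "quad_ref l0 lm l1 y = l0 * ((1 - y) * (1 - 2 * y)) + lm * (4 * y * (1 - y)) + l1 * (y * (2 * y - 1))"

lemma quad_interp_eq_quad_ref:
  assumes "x0 \<noteq> x1"
  shows "quad_interp x0 x1 F t = quad_ref (F x0) (F ((x0 + x1) / 2)) (F x1) ((t - x0) / (x1 - x0))"
proof -
  define h where "h = x1 - x0"
  have "h \<noteq> 0" "x1 = x0 + h" using assms unfolding h_def by simp_all
  then show ?thesis unfolding quad_interp_def quad_ref_def Let_def h_def[symmetric]
    by (simp add: field_simps)
qed

lemma poly_eq_quad_ref:
  fixes p :: "real poly"
  assumes "degree p \<le> 2" and "x0 \<noteq> x1"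
  shows "poly p t = quad_ref (poly p x0) (poly p ((x0 + x1) / 2)) (poly p x1) ((t - x0) / (x1 - x0))"
proof -
  have "poly p t = (\<Sum>i\<le>2. coeff p i * t ^ i)" for t
    unfolding poly_altdef using assms(1) by (intro sum.mono_neutral_left) (auto simp: coeff_eq_0)
  then have expand: "poly p t = coeff p 0 + coeff p 1 * t + coeff p 2 * t\<^sup>2" for t
    by (simp add: numeral_2_eq_2)
  define h where "h = x1 - x0"
  have "h \<noteq> 0" "x1 = x0 + h" "t = x0 + h * ((t - x0) / h)" using assms(2) unfolding h_def by simp_all
  then show ?thesis unfolding expand quad_ref_def h_def[symmetric]
    by (simp add: field_simps power2_eq_square)
qed

lemma quad_ref_integral: "(quad_ref l0 lm l1 has_integral (l0 + 4 * lm + l1) / 6) {0..1}"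
proof -
  define F where "F y = l0 * (y - 3/2 * y^2 + 2/3 * y^3) + lm * (2 * y^2 - 4/3 * y^3)
    + l1 * (- 1/2 * y^2 + 2/3 * y^3)" for y :: real
  have "(F has_real_derivative quad_ref l0 lm l1 y) (at y)" for y
    unfolding F_def quad_ref_def by (auto intro!: derivative_eq_intros simp: algebra_simps power2_eq_square)
  moreover have "F 1 - F 0 = (l0 + 4 * lm + l1) / 6"
    by (simp add: F_def field_simps)
  ultimately show ?thesis by (metis has_integral_unit_by_antiderivative)
qed

lemma has_integral_quad_interp:
  assumes "x0 < x1"
  shows "(quad_interp x0 x1 F has_integral (x1 - x0) / 6 * (F x0 + 4 * F ((x0 + x1) / 2) + F x1)) {x0..x1}"
proof -
  have "((\<lambda>t. quad_ref (F x0) (F ((x0 + x1) / 2)) (F x1) ((t - x0) / (x1 - x0))) has_integral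
      (x1 - x0) * ((F x0 + 4 * F ((x0 + x1) / 2) + F x1) / 6)) {x0..x0 + (x1 - x0)}"
    using assms by (intro has_integral_rescale_unit quad_ref_integral) simp
  moreover have "quad_interp x0 x1 F = (\<lambda>t. quad_ref (F x0) (F ((x0 + x1) / 2)) (F x1) ((t - x0) / (x1 - x0)))"
    using assms by (simp add: fun_eq_iff quad_interp_eq_quad_ref)
  ultimately show ?thesis by (simp add: mult.commute)
qed

(* The five coefficients of each quartic are fixed by its values at 0 and 1 and by its moments
   against quadratics, see quad_ref_times_quartic_left_integral and its right-hand counterpart. *)
definition quartic_left :: "real \<Rightarrow> real" where
  "quartic_left y = 1 + 4 * y - 40 * y^2 + 70 * y^3 - 35 * y^4"

definition quartic_right :: "real \<Rightarrow> real" where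
  "quartic_right y = 6 * y - 40 * y^2 + 70 * y^3 - 35 * y^4"

definition quartic_left' :: "real \<Rightarrow> real" where
  "quartic_left' y = 4 - 80 * y + 210 * y^2 - 140 * y^3"

definition quartic_right' :: "real \<Rightarrow> real" where
  "quartic_right' y = 6 - 80 * y + 210 * y^2 - 140 * y^3"

definition lift_ref :: "real \<Rightarrow> real \<Rightarrow> real \<Rightarrow> real \<Rightarrow> real" where
  "lift_ref g0 gm g1 y = gm + (g0 - gm) * quartic_left y + (g1 - gm) * quartic_right y"

definition lift_ref' :: "real \<Rightarrow> real \<Rightarrow> real \<Rightarrow> real \<Rightarrow> real" where
  "lift_ref' g0 gm g1 y = (g0 - gm) * quartic_left' y + (g1 - gm) * quartic_right' y"

lemma lift_ref_0 [simp]: "lift_ref g0 gm g1 0 = g0"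
  and lift_ref_1 [simp]: "lift_ref g0 gm g1 1 = g1"
  by (simp_all add: lift_ref_def quartic_left_def quartic_right_def)

lemma lift_ref_has_derivative: "(lift_ref g0 gm g1 has_real_derivative lift_ref' g0 gm g1 y) (at y)"
  unfolding lift_ref_def lift_ref'_def quartic_left_def quartic_right_def
    quartic_left'_def quartic_right'_def
  by (auto intro!: derivative_eq_intros simp: algebra_simps)

lemma quad_ref_times_quartic_left_integral:
  "((\<lambda>y. quad_ref l0 lm l1 y * quartic_left y) has_integral l0 / 6) {0..1}"
proof -
  define F where "F y =
      l0 * (y + 1/2 * y^2 - 50/3 * y^3 + 99/2 * y^4 - 65 * y^5 + 245/6 * y^6 - 10 * y^7)
    + lm * (2 * y^2 + 4 * y^3 - 44 * y^4 + 88 * y^5 - 70 * y^6 + 20 * y^7)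
    + l1 * (- 1/2 * y^2 - 2/3 * y^3 + 12 * y^4 - 30 * y^5 + 175/6 * y^6 - 10 * y^7)" for y :: real
  have "(F has_real_derivative quad_ref l0 lm l1 y * quartic_left y) (at y)" for y
    unfolding F_def quad_ref_def quartic_left_def
    by (rule derivative_eq_intros refl | simp)+
       (simp add: algebra_simps power2_eq_square power3_eq_cube power_numeral_reduce)
  from has_integral_unit_by_antiderivative[OF this] show ?thesis by (simp add: F_def)
qed

lemma quad_ref_times_quartic_right_integral:
  "((\<lambda>y. quad_ref l0 lm l1 y * quartic_right y) has_integral l1 / 6) {0..1}"
proof -
  define F where "F y =
      l0 * (3 * y^2 - 58/3 * y^3 + 101/2 * y^4 - 65 * y^5 + 245/6 * y^6 - 10 * y^7)
    + lm * (8 * y^3 - 46 * y^4 + 88 * y^5 - 70 * y^6 + 20 * y^7)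
    + l1 * (- 2 * y^3 + 13 * y^4 - 30 * y^5 + 175/6 * y^6 - 10 * y^7)" for y :: real
  have "(F has_real_derivative quad_ref l0 lm l1 y * quartic_right y) (at y)" for y
    unfolding F_def quad_ref_def quartic_right_def
    by (rule derivative_eq_intros refl | simp)+
       (simp add: algebra_simps power2_eq_square power3_eq_cube power_numeral_reduce)
  from has_integral_unit_by_antiderivative[OF this] show ?thesis by (simp add: F_def)
qed

lemma quad_ref_times_lift_ref_integral:
  "((\<lambda>y. quad_ref l0 lm l1 y * lift_ref g0 gm g1 y) has_integral
     (l0 * g0 + 4 * (lm * gm) + l1 * g1) / 6) {0..1}"
proof -
  have integrand: "(\<lambda>y. quad_ref l0 lm l1 y * lift_ref g0 gm g1 y) = (\<lambda>y. gm * quad_ref l0 lm l1 y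
      + (g0 - gm) * (quad_ref l0 lm l1 y * quartic_left y)
      + (g1 - gm) * (quad_ref l0 lm l1 y * quartic_right y))"
    by (simp add: fun_eq_iff lift_ref_def algebra_simps)
  have integral_value: "(l0 * g0 + 4 * (lm * gm) + l1 * g1) / 6
      = gm * ((l0 + 4 * lm + l1) / 6) + (g0 - gm) * (l0 / 6) + (g1 - gm) * (l1 / 6)"
    by (simp add: field_simps)
  show ?thesis unfolding integrand integral_value
    by (intro has_integral_add has_integral_mult_right quad_ref_integral
        quad_ref_times_quartic_left_integral quad_ref_times_quartic_right_integral)
qed

lemma lift_ref'_square_le:
  assumes "0 \<le> y" "y \<le> 1"
  shows "(lift_ref' g0 gm g1 y)\<^sup>2 \<le> 2 * 436\<^sup>2 * ((g0 - gm)\<^sup>2 + (g1 - gm)\<^sup>2)"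
proof -
  have "0 \<le> y^2" "y^2 \<le> 1" "0 \<le> y^3" "y^3 \<le> 1" using assms by (simp_all add: power_le_one)
  then have "\<bar>quartic_left' y\<bar> \<le> 436" "\<bar>quartic_right' y\<bar> \<le> 436"
    unfolding quartic_left'_def quartic_right'_def using assms by linarith+
  then have bounds: "(quartic_left' y)\<^sup>2 \<le> 436\<^sup>2" "(quartic_right' y)\<^sup>2 \<le> 436\<^sup>2"
    using power_mono[of _ 436 2] by (metis abs_ge_zero power2_abs)+
  have sum_square: "(u + v)\<^sup>2 \<le> 2 * u\<^sup>2 + 2 * v\<^sup>2" for u v :: real
    using sum_squares_bound[of u v] by (simp add: power2_sum)
  define A B where "A = g0 - gm" and "B = g1 - gm"
  have "(lift_ref' g0 gm g1 y)\<^sup>2 \<le> 2 * (A\<^sup>2 * (quartic_left' y)\<^sup>2) + 2 * (B\<^sup>2 * (quartic_right' y)\<^sup>2)"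
    using sum_square[of "A * quartic_left' y" "B * quartic_right' y"]
    unfolding lift_ref'_def A_def[symmetric] B_def[symmetric] by (simp add: power_mult_distrib)
  also have "\<dots> \<le> 2 * (A\<^sup>2 * 436\<^sup>2) + 2 * (B\<^sup>2 * 436\<^sup>2)"
    using bounds by (intro add_mono mult_left_mono) auto
  finally show ?thesis unfolding A_def B_def by (simp add: algebra_simps)
qed

section \<open>The space H^1_0 and the dual norm\<close>

lemma is_H10_integrable:
  assumes "is_H10 a b \<phi> g"
  shows "g integrable_on {a..b}"
  using assms set_lebesgue_integral_eq_integral(1) unfolding is_H10_def by blast

lemma is_H10_continuous:
  assumes "is_H10 a b \<phi> g"
  shows "continuous_on {a..b} \<phi>"
proof (rule continuous_on_eq)
  show "continuous_on {a..b} (\<lambda>t. integral {a..t} g)"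
    by (rule indefinite_integral_continuous_1[OF is_H10_integrable[OF assms]])
qed (use assms in \<open>auto simp: is_H10_def\<close>)

lemma is_H10_square_integrable:
  assumes "is_H10 a b \<phi> g"
  shows "(\<lambda>t. (\<phi> t)\<^sup>2) integrable_on {a..b}"
  using is_H10_continuous[OF assms] by (intro integrable_continuous_interval continuous_intros)

lemma H1norm_w_square:
  assumes "is_H10 a b \<phi> g"
  shows "(H1norm_w a b \<phi> g)\<^sup>2 = integral {a..b} (\<lambda>t. (\<phi> t)\<^sup>2) + integral {a..b} (\<lambda>t. (g t)\<^sup>2)"
    and "0 \<le> H1norm_w a b \<phi> g"
proof -
  have \<phi>2: "(\<lambda>t. (\<phi> t)\<^sup>2) integrable_on {a..b}" and g2: "(\<lambda>t. (g t)\<^sup>2) integrable_on {a..b}"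
    using is_H10_square_integrable[OF assms] assms by (auto simp: is_H10_def)
  have "0 \<le> integral {a..b} (\<lambda>t. (\<phi> t)\<^sup>2)" "0 \<le> integral {a..b} (\<lambda>t. (g t)\<^sup>2)"
    by (auto intro: integral_nonneg \<phi>2 g2)
  then show "(H1norm_w a b \<phi> g)\<^sup>2 = integral {a..b} (\<lambda>t. (\<phi> t)\<^sup>2) + integral {a..b} (\<lambda>t. (g t)\<^sup>2)"
    and "0 \<le> H1norm_w a b \<phi> g"
    unfolding H1norm_w_def integral_add[OF \<phi>2 g2] by simp_all
qed

lemma is_H10_scale:
  assumes "is_H10 a b \<phi> g"
  shows "is_H10 a b (\<lambda>t. c * \<phi> t) (\<lambda>t. c * g t)"
    and "H1norm_w a b (\<lambda>t. c * \<phi> t) (\<lambda>t. c * g t) = \<bar>c\<bar> * H1norm_w a b \<phi> g"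
proof -
  have "(\<lambda>t. c *\<^sub>R g t) absolutely_integrable_on {a..b}"
    using assms unfolding is_H10_def by (intro absolutely_integrable_scaleR_left) auto
  moreover have "(\<lambda>t. c\<^sup>2 * (g t)\<^sup>2) integrable_on {a..b}"
    using integrable_cmul[of "\<lambda>t. (g t)\<^sup>2" "{a..b}" "c\<^sup>2"] assms unfolding is_H10_def by simp
  ultimately show "is_H10 a b (\<lambda>t. c * \<phi> t) (\<lambda>t. c * g t)"
    using assms by (simp add: is_H10_def power_mult_distrib)
  have "(\<lambda>t. (c * \<phi> t)\<^sup>2 + (c * g t)\<^sup>2) = (\<lambda>t. c\<^sup>2 * ((\<phi> t)\<^sup>2 + (g t)\<^sup>2))"
    by (simp add: fun_eq_iff algebra_simps)
  then show "H1norm_w a b (\<lambda>t. c * \<phi> t) (\<lambda>t. c * g t) = \<bar>c\<bar> * H1norm_w a b \<phi> g"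
    by (simp add: H1norm_w_def real_sqrt_mult)
qed

lemma is_H10_eq_0_if_H1norm_w_eq_0:
  assumes "a < b" "is_H10 a b \<phi> g" "H1norm_w a b \<phi> g = 0" "t \<in> {a..b}"
  shows "\<phi> t = 0"
proof -
  have "0 \<le> integral {a..b} (\<lambda>t. (\<phi> t)\<^sup>2)" "0 \<le> integral {a..b} (\<lambda>t. (g t)\<^sup>2)"
    using is_H10_square_integrable[OF assms(2)] assms(2)
    by (auto intro: integral_nonneg simp: is_H10_def)
  then have "integral {a..b} (\<lambda>t. (\<phi> t)\<^sup>2) = 0"
    using H1norm_w_square(1)[OF assms(2)] assms(3) by simp
  then have "((\<lambda>t. (\<phi> t)\<^sup>2) has_integral 0) (cbox a b)"
    using is_H10_square_integrable[OF assms(2)] by (simp add: has_integral_integral)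
  moreover have "continuous_on {a..b} (\<lambda>t. (\<phi> t)\<^sup>2)"
    using is_H10_continuous[OF assms(2)] by (intro continuous_intros)
  ultimately have "(\<phi> t)\<^sup>2 = 0"
    using assms by (intro has_integral_0_cbox_imp_0[of a b]) auto
  then show ?thesis by simp
qed

lemma bdd_above_Hm1_set:
  assumes "continuous_on {a..b} \<mu>"
  shows "bdd_above {integral {a..b} (\<lambda>t. \<mu> t * \<phi> t) | \<phi> g. is_H10 a b \<phi> g \<and> H1norm_w a b \<phi> g = 1}"
proof (rule bdd_aboveI, safe)
  fix \<phi> g assume H: "is_H10 a b \<phi> g" and N: "H1norm_w a b \<phi> g = 1"
  have \<mu>2: "(\<lambda>t. (\<mu> t)\<^sup>2) integrable_on {a..b}"
    using assms by (intro integrable_continuous_interval continuous_intros)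
  have \<phi>2: "(\<lambda>t. (\<phi> t)\<^sup>2) integrable_on {a..b}" by (rule is_H10_square_integrable[OF H])
  have "integral {a..b} (\<lambda>t. \<mu> t * \<phi> t) \<le> integral {a..b} (\<lambda>t. ((\<mu> t)\<^sup>2 + (\<phi> t)\<^sup>2) / 2)"
  proof (rule integral_le)
    show "(\<lambda>t. \<mu> t * \<phi> t) integrable_on {a..b}"
      using assms is_H10_continuous[OF H] by (intro integrable_continuous_interval continuous_intros)
    show "(\<lambda>t. ((\<mu> t)\<^sup>2 + (\<phi> t)\<^sup>2) / 2) integrable_on {a..b}"
      using \<mu>2 \<phi>2 by (intro integrable_on_divide integrable_add)
    fix t
    show "\<mu> t * \<phi> t \<le> ((\<mu> t)\<^sup>2 + (\<phi> t)\<^sup>2) / 2"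
      using sum_squares_bound[of "\<mu> t" "\<phi> t"] by (simp add: field_simps)
  qed
  also have "\<dots> = (integral {a..b} (\<lambda>t. (\<mu> t)\<^sup>2) + integral {a..b} (\<lambda>t. (\<phi> t)\<^sup>2)) / 2"
    using \<mu>2 \<phi>2 by (simp add: integral_add)
  also have "\<dots> \<le> (integral {a..b} (\<lambda>t. (\<mu> t)\<^sup>2) + 1) / 2"
    using H1norm_w_square(1)[OF H] N integral_nonneg[of "\<lambda>t. (g t)\<^sup>2" "{a..b}"] H
    by (auto simp: is_H10_def)
  finally show "integral {a..b} (\<lambda>t. \<mu> t * \<phi> t) \<le> (integral {a..b} (\<lambda>t. (\<mu> t)\<^sup>2) + 1) / 2" .
qed

lemma abs_integral_mult_le_H1norm_w_Hm1norm:
  assumes "a < b" and \<mu>: "continuous_on {a..b} \<mu>" and H: "is_H10 a b \<phi> g"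
  shows "\<bar>integral {a..b} (\<lambda>t. \<mu> t * \<phi> t)\<bar> \<le> H1norm_w a b \<phi> g * Hm1norm a b \<mu>"
proof (cases "H1norm_w a b \<phi> g = 0")
  case True
  then have "integral {a..b} (\<lambda>t. \<mu> t * \<phi> t) = integral {a..b} (\<lambda>t. 0)"
    using is_H10_eq_0_if_H1norm_w_eq_0[OF \<open>a < b\<close> H] by (intro integral_cong) auto
  then show ?thesis using True by simp
next
  case False
  define N where "N = H1norm_w a b \<phi> g"
  have "N > 0" using False H1norm_w_square(2)[OF H] unfolding N_def by simp
  have scaled: "c * integral {a..b} (\<lambda>t. \<mu> t * \<phi> t) \<le> Hm1norm a b \<mu>" if "\<bar>c\<bar> = 1 / N" for c
  proof -
    have "integral {a..b} (\<lambda>t. \<mu> t * (c * \<phi> t)) \<le> Hm1norm a b \<mu>"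
      unfolding Hm1norm_def
    proof (rule cSup_upper[OF _ bdd_above_Hm1_set[OF \<mu>]], intro CollectI exI conjI)
      show "is_H10 a b (\<lambda>t. c * \<phi> t) (\<lambda>t. c * g t)" by (rule is_H10_scale(1)[OF H])
      show "H1norm_w a b (\<lambda>t. c * \<phi> t) (\<lambda>t. c * g t) = 1"
        using is_H10_scale(2)[OF H] that \<open>N > 0\<close> unfolding N_def by simp
    qed simp
    moreover have "(\<lambda>t. \<mu> t * (c * \<phi> t)) = (\<lambda>t. c * (\<mu> t * \<phi> t))" by (simp add: fun_eq_iff)
    ultimately show ?thesis by simp
  qed
  have "\<bar>integral {a..b} (\<lambda>t. \<mu> t * \<phi> t)\<bar> / N \<le> Hm1norm a b \<mu>"
    using scaled[of "1 / N"] scaled[of "- 1 / N"] \<open>N > 0\<close> by (auto simp: abs_if)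
  then show ?thesis using \<open>N > 0\<close> unfolding N_def by (simp add: field_simps)
qed

lemma is_H10_bubble:
  assumes "a \<le> b"
  shows "is_H10 a b (\<lambda>t. (t - a) * (b - t)) (\<lambda>t. a + b - 2 * t)"
  unfolding is_H10_def
proof (intro conjI ballI)
  show "(\<lambda>t. a + b - 2 * t) absolutely_integrable_on {a..b}"
    by (rule absolutely_integrable_continuous_real) (intro continuous_intros)
  show "(\<lambda>t. (a + b - 2 * t)\<^sup>2) integrable_on {a..b}"
    by (rule integrable_continuous_interval) (intro continuous_intros)
  fix t assume "t \<in> {a..b}"
  then have "((\<lambda>t. a + b - 2 * t) has_integral (t - a) * (b - t) - (a - a) * (b - a)) {a..t}"
    by (intro fundamental_theorem_of_calculus)
      (auto intro!: derivative_eq_intros simp: has_real_derivative_iff_has_vector_derivative[symmetric] algebra_simps)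
  then show "(t - a) * (b - t) = integral {a..t} (\<lambda>t. a + b - 2 * t)"
    by (simp add: integral_unique)
qed simp

lemma Hm1norm_nonneg:
  assumes "a < b" and \<mu>: "continuous_on {a..b} \<mu>"
  shows "0 \<le> Hm1norm a b \<mu>"
proof -
  note bubble = is_H10_bubble[OF less_imp_le[OF \<open>a < b\<close>]]
  define N where "N = H1norm_w a b (\<lambda>t. (t - a) * (b - t)) (\<lambda>t. a + b - 2 * t)"
  have "N \<noteq> 0"
  proof
    assume "N = 0"
    then have "((a + b) / 2 - a) * (b - (a + b) / 2) = 0"
      using is_H10_eq_0_if_H1norm_w_eq_0[OF \<open>a < b\<close> bubble, of "(a + b) / 2"] \<open>a < b\<close>
      unfolding N_def by simp
    then show False using \<open>a < b\<close> by simp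
  qed
  then have "0 < N" using H1norm_w_square(2)[OF bubble] unfolding N_def by simp
  moreover have "0 \<le> N * Hm1norm a b \<mu>"
    using abs_integral_mult_le_H1norm_w_Hm1norm[OF \<open>a < b\<close> \<mu> bubble] unfolding N_def by (rule order_trans[rotated]) simp
  ultimately show ?thesis by (simp add: zero_le_mult_iff)
qed

lemma is_H10_poincare:
  assumes "a \<le> b" and H: "is_H10 a b \<phi> g"
  shows "integral {a..b} (\<lambda>t. (\<phi> t)\<^sup>2) \<le> (b - a)\<^sup>2 * integral {a..b} (\<lambda>t. (g t)\<^sup>2)"
proof -
  have g: "g integrable_on {a..b}" and g2: "(\<lambda>t. (g t)\<^sup>2) integrable_on {a..b}"
    using is_H10_integrable[OF H] H by (auto simp: is_H10_def)
  have "integral {a..b} (\<lambda>t. (\<phi> t)\<^sup>2) \<le> integral {a..b} (\<lambda>t. (b - a) * integral {a..b} (\<lambda>t. (g t)\<^sup>2))"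
  proof (rule integral_le[OF is_H10_square_integrable[OF H]])
    fix t assume t: "t \<in> {a..b}"
    then have "(\<phi> t)\<^sup>2 = (integral {a..t} g)\<^sup>2" using H by (simp add: is_H10_def)
    also have "\<dots> \<le> (b - a) * integral {a..b} (\<lambda>t. (g t)\<^sup>2)"
      using t by (intro integral_square_le_subinterval integrable_subinterval_real[OF g] g2) auto
    finally show "(\<phi> t)\<^sup>2 \<le> (b - a) * integral {a..b} (\<lambda>t. (g t)\<^sup>2)" .
  qed (rule integrable_const_ivl)
  also have "\<dots> = (b - a)\<^sup>2 * integral {a..b} (\<lambda>t. (g t)\<^sup>2)"
    using assms by (simp add: power2_eq_square)
  finally show ?thesis .
qed

section \<open>Meshes and C^1 splines\<close>

locale mesh =
  fixes a b :: real and M :: nat and x :: "nat \<Rightarrow> real"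
  assumes is_mesh: "is_mesh a b M x"
begin

lemma first_node [simp]: "x 0 = a" and last_node [simp]: "x M = b"
  and left_less_right: "a < b" and one_le_elements: "1 \<le> M"
  using is_mesh by (auto simp: is_mesh_def)

lemma node_less_next: "i \<in> {1..M} \<Longrightarrow> x (i - 1) < x i"
  using is_mesh by (auto simp: is_mesh_def)

lemma node_mono: "i \<le> j \<Longrightarrow> j \<le> M \<Longrightarrow> x i \<le> x j"
proof (induction j)
  case (Suc j)
  show ?case
  proof (cases "i = Suc j")
    case False
    then have "x i \<le> x j" using Suc by auto
    also have "x j < x (Suc j)" using node_less_next[of "Suc j"] Suc.prems by auto
    finally show ?thesis by simp
  qed simp
qed simp

lemma node_in_interval: "i \<le> M \<Longrightarrow> x i \<in> {a..b}"
  using node_mono[of 0 i] node_mono[of i M] by auto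

lemma element_subset: "i \<in> {1..M} \<Longrightarrow> {x (i - 1)..x i} \<subseteq> {a..b}"
  using node_in_interval[of "i - 1"] node_in_interval[of i] by auto

lemma elem_in_range:
  assumes "t \<in> {a..b}"
  shows "elem M x t \<in> {1..M}" "x (elem M x t - 1) \<le> t" "t \<le> x (elem M x t)"
proof -
  let ?P = "\<lambda>i. 1 \<le> i \<and> i \<le> M \<and> t \<le> x i"
  have P: "?P (elem M x t)"
    unfolding elem_def by (rule LeastI[of ?P M]) (use assms one_le_elements in auto)
  then show "elem M x t \<in> {1..M}" "t \<le> x (elem M x t)" by auto
  show "x (elem M x t - 1) \<le> t"
  proof (cases "elem M x t = 1")
    case False
    then have "\<not> ?P (elem M x t - 1)"
      using P unfolding elem_def by (intro not_less_Least) auto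
    then show ?thesis using P False by auto
  qed (use assms in simp)
qed

lemma elem_eqI:
  assumes "i \<in> {1..M}" "x (i - 1) < t" "t \<le> x i"
  shows "elem M x t = i"
  unfolding elem_def
proof (rule Least_equality)
  fix j assume j: "1 \<le> j \<and> j \<le> M \<and> t \<le> x j"
  show "i \<le> j"
  proof (rule ccontr)
    assume "\<not> i \<le> j"
    then have "x j \<le> x (i - 1)" using node_mono[of j "i - 1"] assms by auto
    then show False using j assms by linarith
  qed
qed (use assms in auto)

definition width :: "nat \<Rightarrow> real" where
  "width i = x i - x (i - 1)"

definition midpt :: "nat \<Rightarrow> real" where
  "midpt i = (x (i - 1) + x i) / 2"

lemma width_pos: "i \<in> {1..M} \<Longrightarrow> 0 < width i"
  using node_less_next unfolding width_def by force

lemma midpt_in_element: "i \<in> {1..M} \<Longrightarrow> midpt i \<in> {x (i - 1)..x i}"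
  using node_less_next unfolding midpt_def by force

lemma has_integral_sum_elements:
  fixes f :: "real \<Rightarrow> real"
  assumes "\<And>i. i \<in> {1..M} \<Longrightarrow> (f has_integral I i) {x (i - 1)..x i}"
  shows "(f has_integral (\<Sum>i=1..M. I i)) {a..b}"
proof -
  have "(f has_integral (\<Sum>i=1..n. I i)) {x 0..x n}" if "n \<le> M" for n
    using that
  proof (induction n)
    case (Suc n)
    have "(f has_integral (\<Sum>i=1..n. I i) + I (Suc n)) {x 0..x (Suc n)}"
      using Suc node_mono[of 0 n] node_mono[of n "Suc n"] assms[of "Suc n"]
      by (intro has_integral_combine[of "x 0" "x n" "x (Suc n)"]) auto
    then show ?case by simp
  qed (simp add: has_integral_refl)
  from this[of M] show ?thesis by simp
qed

lemma continuous_on_elements: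
  assumes "\<And>i. i \<in> {1..M} \<Longrightarrow> continuous_on {x (i - 1)..x i} f"
  shows "continuous_on {a..b} f"
proof -
  have "continuous_on {x 0..x n} f" if "n \<le> M" for n
    using that
  proof (induction n)
    case (Suc n)
    have "{x 0..x (Suc n)} = {x 0..x n} \<union> {x n..x (Suc n)}"
      using node_mono[of 0 n] node_mono[of n "Suc n"] Suc.prems by auto
    then show ?case
      using continuous_on_closed_Un[of "{x 0..x n}" "{x n..x (Suc n)}" f] Suc assms[of "Suc n"] by auto
  qed simp
  from this[of M] show ?thesis by simp
qed

lemma integrable_piecewise_continuous:
  fixes f :: "real \<Rightarrow> real"
  assumes "\<And>i. i \<in> {1..M} \<Longrightarrow> continuous_on {x (i - 1)..x i} (F i)"
    and "\<And>i t. i \<in> {1..M} \<Longrightarrow> x (i - 1) < t \<Longrightarrow> t < x i \<Longrightarrow> f t = F i t"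
  shows "f integrable_on {a..b}"
proof -
  have "(f has_integral (\<Sum>i=1..M. integral {x (i - 1)..x i} (F i))) {a..b}"
    using assms by (intro has_integral_sum_elements has_integral_eq_on_interior)
  then show ?thesis by blast
qed

lemma integral_sum_elements:
  fixes f :: "real \<Rightarrow> real"
  assumes "f integrable_on {a..b}"
  shows "integral {a..b} f = (\<Sum>i=1..M. integral {x (i - 1)..x i} f)"
proof -
  have "(f has_integral (\<Sum>i=1..M. integral {x (i - 1)..x i} f)) {a..b}"
    using integrable_subinterval_real[OF assms element_subset]
    by (intro has_integral_sum_elements) (simp add: has_integral_integrable_integral)
  then show ?thesis by (rule integral_unique)
qed

lemma element_interiorE:
  assumes "t \<in> {a..b} - x ` {0..M}"
  obtains i where "i \<in> {1..M}" "x (i - 1) < t" "t < x i"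
proof -
  note range = elem_in_range[of t]
  have "elem M x t - 1 \<in> {0..M}" "elem M x t \<in> {0..M}" using assms range(1) by auto
  then have "x (elem M x t - 1) \<noteq> t" "x (elem M x t) \<noteq> t" using assms by (metis DiffD2 image_eqI)+
  then show thesis using that range assms by force
qed

definition elem_poly :: "nat \<Rightarrow> (real \<Rightarrow> real) \<Rightarrow> nat \<Rightarrow> real poly" where
  "elem_poly k v i = (SOME p. degree p \<le> k \<and> (\<forall>t\<in>{x (i - 1)..x i}. v t = poly p t))"

lemma elem_poly_spec:
  assumes "pw_poly k M x v" "i \<in> {1..M}"
  shows "degree (elem_poly k v i) \<le> k" "\<And>t. t \<in> {x (i - 1)..x i} \<Longrightarrow> v t = poly (elem_poly k v i) t"
proof -
  have "\<exists>p. degree p \<le> k \<and> (\<forall>t\<in>{x (i - 1)..x i}. v t = poly p t)"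
    using assms unfolding pw_poly_def by auto
  then have "degree (elem_poly k v i) \<le> k \<and> (\<forall>t\<in>{x (i - 1)..x i}. v t = poly (elem_poly k v i) t)"
    unfolding elem_poly_def by (rule someI_ex)
  then show "degree (elem_poly k v i) \<le> k" "\<And>t. t \<in> {x (i - 1)..x i} \<Longrightarrow> v t = poly (elem_poly k v i) t"
    by auto
qed

lemma spline_0_diff:
  assumes "spline k 0 M x v" "spline k 0 M x w"
  shows "spline k 0 M x (\<lambda>t. v t - w t)"
proof -
  have "pw_poly k M x (\<lambda>t. v t - w t)"
    unfolding pw_poly_def
  proof
    fix i assume i: "i \<in> {1..M}"
    have "pw_poly k M x v" "pw_poly k M x w" using assms unfolding spline_def by auto
    note pv = elem_poly_spec[OF this(1) i] and pw = elem_poly_spec[OF this(2) i]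
    show "\<exists>p. degree p \<le> k \<and> (\<forall>t\<in>{x (i - 1)..x i}. v t - w t = poly p t)"
      using pv pw by (intro exI[of _ "elem_poly k v i - elem_poly k w i"])
        (auto intro: order_trans[OF degree_diff_le])
  qed
  then show ?thesis using assms unfolding spline_def by (auto intro: continuous_intros)
qed

lemma spline_0_continuous: "spline k 0 M x v \<Longrightarrow> continuous_on {a..b} v"
  unfolding spline_def by simp

lemma spline_2_0_on_element:
  assumes "spline 2 0 M x lam" "i \<in> {1..M}" "t \<in> {x (i - 1)..x i}"
  shows "lam t = quad_ref (lam (x (i - 1))) (lam (midpt i)) (lam (x i)) ((t - x (i - 1)) / width i)"
proof -
  have "pw_poly 2 M x lam" using assms(1) unfolding spline_def by auto
  note p = elem_poly_spec[OF this assms(2)]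
  have "x (i - 1) \<noteq> x i" using node_less_next[OF assms(2)] by simp
  from poly_eq_quad_ref[OF p(1) this, of t] show ?thesis
    using p(2) assms(3) midpt_in_element[OF assms(2)] node_less_next[OF assms(2)]
    unfolding midpt_def width_def by simp
qed

lemma spline_1_derivative:
  assumes "spline k 1 M x v"
  obtains D where "\<And>t. t \<in> {a..b} \<Longrightarrow> (v has_real_derivative D t) (at t within {a..b})"
    "continuous_on {a..b} D"
proof -
  from assms obtain D where "\<forall>t\<in>{a..b}. (v has_real_derivative D t) (at t within {a..b})"
    "continuous_on {a..b} D" unfolding spline_def C1_on_def by auto
  with that show thesis by blast
qed

lemma Dv_eqI:
  assumes "(v has_real_derivative D) (at t within {a..b})" "t \<in> {a..b}"
  shows "Dv a b v t = D"
  using assms left_less_right vector_derivative_within_cbox[of a b t v D]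
  unfolding Dv_def by (simp add: has_real_derivative_iff_has_vector_derivative)

lemma spline_1_has_derivative_Dv:
  assumes "spline k 1 M x v" "t \<in> {a..b}"
  shows "(v has_real_derivative Dv a b v t) (at t within {a..b})"
  using spline_1_derivative[OF assms(1)] Dv_eqI assms(2) by metis

lemma continuous_on_Dv:
  assumes "spline k 1 M x v"
  shows "continuous_on {a..b} (Dv a b v)"
proof -
  obtain D where D: "\<And>t. t \<in> {a..b} \<Longrightarrow> (v has_real_derivative D t) (at t within {a..b})"
    "continuous_on {a..b} D" using spline_1_derivative[OF assms] by blast
  show ?thesis using D(2) by (rule continuous_on_eq) (use Dv_eqI[OF D(1)] in auto)
qed

lemma spline_1_continuous:
  assumes "spline k 1 M x v"
  shows "continuous_on {a..b} v"
  using spline_1_has_derivative_Dv[OF assms] by (rule DERIV_continuous_on)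

lemma Dv_diff:
  assumes "spline k 1 M x v" "spline l 1 M x w" "t \<in> {a..b}"
  shows "Dv a b (\<lambda>t. v t - w t) t = Dv a b v t - Dv a b w t"
  using assms by (intro Dv_eqI DERIV_diff spline_1_has_derivative_Dv)

lemma Dv_on_element:
  assumes "spline k 1 M x v" "i \<in> {1..M}" "t \<in> {x (i - 1)..x i}"
  shows "Dv a b v t = poly (pderiv (elem_poly k v i)) t"
proof -
  have "pw_poly k M x v" using assms(1) unfolding spline_def by auto
  note p = elem_poly_spec[OF this assms(2)]
  have "t \<in> {a..b}" using element_subset[OF assms(2)] assms(3) by auto
  then have "(v has_real_derivative Dv a b v t) (at t within {x (i - 1)..x i})"
    using spline_1_has_derivative_Dv[OF assms(1)] element_subset[OF assms(2)] by (blast intro: DERIV_subset)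
  then have "(poly (elem_poly k v i) has_real_derivative Dv a b v t) (at t within {x (i - 1)..x i})"
    by (rule has_field_derivative_transform_within[where d = 1]) (use assms(3) p(2) in auto)
  moreover have "(poly (elem_poly k v i) has_real_derivative poly (pderiv (elem_poly k v i)) t)
      (at t within {x (i - 1)..x i})"
    by (rule has_field_derivative_at_within[OF poly_DERIV])
  ultimately show ?thesis
    using node_less_next[OF assms(2)] assms(3) vector_derivative_within_cbox
    by (metis cbox_interval has_real_derivative_iff_has_vector_derivative)
qed

lemma Dv_Dv_on_element:
  assumes "spline k 1 M x v" "i \<in> {1..M}" "x (i - 1) < t" "t < x i"
  shows "(Dv a b v has_real_derivative poly (pderiv (pderiv (elem_poly k v i))) t) (at t)"
    and "Dv a b (Dv a b v) t = poly (pderiv (pderiv (elem_poly k v i))) t"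
proof -
  show deriv: "(Dv a b v has_real_derivative poly (pderiv (pderiv (elem_poly k v i))) t) (at t)"
    by (rule has_field_derivative_transform_within_open[OF poly_DERIV, where S = "{x (i - 1)<..<x i}"])
      (use assms Dv_on_element[OF assms(1,2)] in auto)
  have "t \<in> {a..b}" using element_subset[OF assms(2)] assms(3,4) by auto
  then show "Dv a b (Dv a b v) t = poly (pderiv (pderiv (elem_poly k v i))) t"
    using Dv_eqI has_field_derivative_at_within[OF deriv] by blast
qed

lemma Dv_Dv_has_integral:
  assumes "spline k 1 M x v" "a \<le> s" "s \<le> s'" "s' \<le> b"
  shows "(Dv a b (Dv a b v) has_integral Dv a b v s' - Dv a b v s) {s..s'}"
proof (rule fundamental_theorem_of_calculus_interior_strong[of "x ` {0..M}"])
  show "continuous_on {s..s'} (Dv a b v)"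
    using continuous_on_Dv[OF assms(1)] by (rule continuous_on_subset) (use assms in auto)
next
  fix t assume "t \<in> {s<..<s'} - x ` {0..M}"
  then have "t \<in> {a..b} - x ` {0..M}" using assms by auto
  then obtain i where "i \<in> {1..M}" "x (i - 1) < t" "t < x i" by (rule element_interiorE)
  then show "(Dv a b v has_vector_derivative Dv a b (Dv a b v) t) (at t)"
    using Dv_Dv_on_element[OF assms(1)] by (simp add: has_real_derivative_iff_has_vector_derivative)
qed (use assms in auto)

lemma Dv_Dv_square_integrable:
  assumes "spline k 1 M x v"
  shows "(\<lambda>t. (Dv a b (Dv a b v) t)\<^sup>2) integrable_on {a..b}"
  by (rule integrable_piecewise_continuous[of "\<lambda>i t. (poly (pderiv (pderiv (elem_poly k v i))) t)\<^sup>2"])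
    (simp_all add: Dv_Dv_on_element(2)[OF assms] continuous_on_power continuous_on_poly)

definition curvature_energy :: "real \<Rightarrow> real \<Rightarrow> (real \<Rightarrow> real) \<Rightarrow> real" where
  "curvature_energy c d v = integral {c..d} (\<lambda>t. (Dv a b (Dv a b v) t)\<^sup>2)"

lemma curvature_energy_nonneg:
  assumes "spline k 1 M x v" "a \<le> c" "c \<le> d" "d \<le> b"
  shows "0 \<le> curvature_energy c d v"
  unfolding curvature_energy_def
  using integrable_subinterval_real[OF Dv_Dv_square_integrable[OF assms(1)], of c d] assms
  by (intro integral_nonneg) auto

lemma Dv_increment_square_le:
  assumes "spline k 1 M x v" "a \<le> c" "d \<le> b" "s \<in> {c..d}" "s' \<in> {c..d}"
  shows "(Dv a b v s' - Dv a b v s)\<^sup>2 \<le> (d - c) * curvature_energy c d v"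
proof -
  have square: "(\<lambda>t. (Dv a b (Dv a b v) t)\<^sup>2) integrable_on {c..d}"
    using integrable_subinterval_real[OF Dv_Dv_square_integrable[OF assms(1)]] assms by auto
  have "(Dv a b v r' - Dv a b v r)\<^sup>2 \<le> (d - c) * integral {c..d} (\<lambda>t. (Dv a b (Dv a b v) t)\<^sup>2)"
    if "r \<in> {c..d}" "r' \<in> {c..d}" "r \<le> r'" for r r'
  proof -
    have "(Dv a b (Dv a b v) has_integral Dv a b v r' - Dv a b v r) {r..r'}"
      using that assms by (intro Dv_Dv_has_integral[OF assms(1)]) auto
    then show ?thesis
      using integral_square_le_subinterval[OF _ square, of r r'] that
      by (auto simp: integral_unique has_integral_integrable)
  qed
  from this[of s s'] this[of s' s] assms(4,5) show ?thesis
    unfolding curvature_energy_def by (cases "s \<le> s'") (auto simp: power2_commute)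
qed

section \<open>Simpson's rule and the quartic lift on a mesh\<close>

definition simpson_sum :: "(real \<Rightarrow> real) \<Rightarrow> real" where
  "simpson_sum F = (\<Sum>i=1..M. width i / 6 * (F (x (i - 1)) + 4 * F (midpt i) + F (x i)))"

lemma dip_eq_simpson_sum: "dip M x f g = simpson_sum (\<lambda>t. f t * g t)"
proof -
  let ?F = "\<lambda>t. f t * g t"
  have "(interp2 M x ?F has_integral simpson_sum ?F) {a..b}"
    unfolding simpson_sum_def
  proof (rule has_integral_sum_elements)
    fix i assume i: "i \<in> {1..M}"
    have "(quad_interp (x (i - 1)) (x i) ?F has_integral width i / 6 * (?F (x (i - 1)) + 4 * ?F (midpt i) + ?F (x i)))
        {x (i - 1)..x i}"
      unfolding width_def midpt_def by (rule has_integral_quad_interp[OF node_less_next[OF i]])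
    then show "(interp2 M x ?F has_integral width i / 6 * (?F (x (i - 1)) + 4 * ?F (midpt i) + ?F (x i)))
        {x (i - 1)..x i}"
      by (rule has_integral_spike_finite[of "{x (i - 1)}", rotated 2])
        (auto simp: interp2_def Let_def elem_eqI[OF i])
  qed
  then show ?thesis unfolding dip_def by (simp add: integral_unique)
qed

lemma simpson_sum_diff: "simpson_sum (\<lambda>t. F t - G t) = simpson_sum F - simpson_sum G"
  unfolding simpson_sum_def by (simp add: sum_subtractf[symmetric] algebra_simps)

lemma simpson_sum_cong:
  assumes "\<And>t. t \<in> {a..b} \<Longrightarrow> F t = G t"
  shows "simpson_sum F = simpson_sum G"
  unfolding simpson_sum_def
proof (rule sum.cong[OF refl])
  fix i assume i: "i \<in> {1..M}"
  then have "x (i - 1) \<in> {a..b}" "midpt i \<in> {a..b}" "x i \<in> {a..b}"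
    using midpt_in_element[OF i] element_subset[OF i] node_less_next[OF i] by auto
  then show "width i / 6 * (F (x (i - 1)) + 4 * F (midpt i) + F (x i))
      = width i / 6 * (G (x (i - 1)) + 4 * G (midpt i) + G (x i))"
    using assms by simp
qed

definition lift_on :: "(real \<Rightarrow> real) \<Rightarrow> nat \<Rightarrow> real \<Rightarrow> real" where
  "lift_on g i t = lift_ref (g (x (i - 1))) (g (midpt i)) (g (x i)) ((t - x (i - 1)) / width i)"

definition lift_on' :: "(real \<Rightarrow> real) \<Rightarrow> nat \<Rightarrow> real \<Rightarrow> real" where
  "lift_on' g i t = lift_ref' (g (x (i - 1))) (g (midpt i)) (g (x i)) ((t - x (i - 1)) / width i) / width i"

definition lift :: "(real \<Rightarrow> real) \<Rightarrow> real \<Rightarrow> real" where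
  "lift g t = lift_on g (elem M x t) t"

definition lift' :: "(real \<Rightarrow> real) \<Rightarrow> real \<Rightarrow> real" where
  "lift' g t = lift_on' g (elem M x t) t"

lemma lift_on_left: "lift_on g i (x (i - 1)) = g (x (i - 1))"
  unfolding lift_on_def by simp

lemma lift_on_right: "i \<in> {1..M} \<Longrightarrow> lift_on g i (x i) = g (x i)"
  using width_pos unfolding lift_on_def width_def by simp

lemma lift_on_element:
  assumes i: "i \<in> {1..M}" and t: "t \<in> {x (i - 1)..x i}"
  shows "lift g t = lift_on g i t"
proof (cases "x (i - 1) < t")
  case True
  then show ?thesis unfolding lift_def using elem_eqI[OF i] t by simp
next
  case False
  then have t_eq: "t = x (i - 1)" using t by simp
  show ?thesis
  proof (cases "i = 1")
    case True
    have "elem M x t = 1"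
      unfolding elem_def t_eq True
      by (rule Least_equality) (use one_le_elements node_mono[of 0 1] in auto)
    then show ?thesis unfolding lift_def using True by simp
  next
    case False
    then have i': "i - 1 \<in> {1..M}" using i by auto
    then have "elem M x t = i - 1" using elem_eqI[OF i'] node_less_next[OF i'] t_eq by simp
    then show ?thesis
      unfolding lift_def t_eq using lift_on_right[OF i'] lift_on_left[of g i] by simp
  qed
qed

lemma lift_on_has_derivative:
  assumes "i \<in> {1..M}"
  shows "(lift_on g i has_real_derivative lift_on' g i t) (at t)"
proof -
  have "((\<lambda>t. (t - x (i - 1)) / width i) has_real_derivative 1 / width i) (at t)"
    using width_pos[OF assms] by (auto intro!: derivative_eq_intros)
  from DERIV_chain2[OF lift_ref_has_derivative this] show ?thesis
    unfolding lift_on_def[abs_def] lift_on'_def by simp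
qed

lemma continuous_on_lift_on':
  assumes "i \<in> {1..M}"
  shows "continuous_on S (lift_on' g i)"
  unfolding lift_on'_def lift_ref'_def quartic_left'_def quartic_right'_def
  using width_pos[OF assms] by (intro continuous_intros) auto

lemma lift_has_derivative:
  assumes i: "i \<in> {1..M}" and t: "x (i - 1) < t" "t < x i"
  shows "(lift g has_real_derivative lift' g t) (at t)" and "lift' g t = lift_on' g i t"
proof -
  show eq: "lift' g t = lift_on' g i t" unfolding lift'_def using elem_eqI[OF i] t by simp
  have "(lift g has_real_derivative lift_on' g i t) (at t)"
    by (rule has_field_derivative_transform_within_open[OF lift_on_has_derivative[OF i],
          of "{x (i - 1)<..<x i}"]) (use t lift_on_element[OF i] in auto)
  then show "(lift g has_real_derivative lift' g t) (at t)" unfolding eq .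
qed

lemma continuous_on_lift: "continuous_on {a..b} (lift g)"
proof (rule continuous_on_elements)
  fix i assume i: "i \<in> {1..M}"
  have "continuous_on {x (i - 1)..x i} (lift_on g i)"
    using lift_on_has_derivative[OF i] by (intro DERIV_continuous_on) (rule has_field_derivative_at_within)
  then show "continuous_on {x (i - 1)..x i} (lift g)"
    by (rule continuous_on_eq) (use lift_on_element[OF i] in auto)
qed

lemma lift_at_left: "lift g a = g a"
  using lift_on_element[of 1 a g] lift_on_left[of g 1] one_le_elements node_mono[of 0 1] by auto

lemma lift_at_right: "lift g b = g b"
  using lift_on_element[of M b g] lift_on_right[of M g] one_le_elements node_mono[of "M - 1" M] by auto

lemma has_integral_lift':
  assumes "t \<in> {a..b}"
  shows "(lift' g has_integral lift g t - lift g a) {a..t}"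
proof (rule fundamental_theorem_of_calculus_interior_strong[of "x ` {0..M}"])
  show "continuous_on {a..t} (lift g)"
    using continuous_on_lift by (rule continuous_on_subset) (use assms in auto)
next
  fix s assume "s \<in> {a<..<t} - x ` {0..M}"
  then have "s \<in> {a..b} - x ` {0..M}" using assms by auto
  then obtain i where "i \<in> {1..M}" "x (i - 1) < s" "s < x i" by (rule element_interiorE)
  then show "(lift g has_vector_derivative lift' g s) (at s)"
    using lift_has_derivative by (simp add: has_real_derivative_iff_has_vector_derivative)
qed (use assms in auto)

lemma lift_is_H10:
  assumes "g a = 0" "g b = 0"
  shows "is_H10 a b (lift g) (lift' g)"
  unfolding is_H10_def
proof (intro conjI ballI)
  have interior: "lift' g t = lift_on' g i t" if "i \<in> {1..M}" "x (i - 1) < t" "t < x i" for i t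
    using lift_has_derivative(2) that by blast
  have "lift' g integrable_on {a..b}"
    by (rule integrable_piecewise_continuous[of "lift_on' g"]) (simp_all add: continuous_on_lift_on' interior)
  moreover have "(\<lambda>t. norm (lift' g t)) integrable_on {a..b}"
    by (rule integrable_piecewise_continuous[of "\<lambda>i t. norm (lift_on' g i t)"])
      (simp_all add: continuous_on_rabs continuous_on_lift_on' interior)
  ultimately show "lift' g absolutely_integrable_on {a..b}"
    unfolding absolutely_integrable_on_def ..
  show "(\<lambda>t. (lift' g t)\<^sup>2) integrable_on {a..b}"
    by (rule integrable_piecewise_continuous[of "\<lambda>i t. (lift_on' g i t)\<^sup>2"])
      (simp_all add: continuous_on_power continuous_on_lift_on' interior)
  show "lift g t = integral {a..t} (lift' g)" if "t \<in> {a..b}" for t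
    using has_integral_lift'[OF that, of g] lift_at_left[of g] assms(1)
    by (intro integral_unique[symmetric]) simp
  show "lift g b = 0" using lift_at_right assms(2) by simp
qed

lemma has_integral_times_lift:
  assumes "spline 2 0 M x lam"
  shows "((\<lambda>t. lam t * lift g t) has_integral simpson_sum (\<lambda>t. lam t * g t)) {a..b}"
  unfolding simpson_sum_def
proof (rule has_integral_sum_elements)
  fix i assume i: "i \<in> {1..M}"
  let ?y = "\<lambda>t. (t - x (i - 1)) / width i"
  have "((\<lambda>t. quad_ref (lam (x (i - 1))) (lam (midpt i)) (lam (x i)) (?y t)
        * lift_ref (g (x (i - 1))) (g (midpt i)) (g (x i)) (?y t)) has_integral
      width i * ((lam (x (i - 1)) * g (x (i - 1)) + 4 * (lam (midpt i) * g (midpt i)) + lam (x i) * g (x i)) / 6))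
      {x (i - 1)..x (i - 1) + width i}"
    using width_pos[OF i] by (intro has_integral_rescale_unit quad_ref_times_lift_ref_integral)
  moreover have "x (i - 1) + width i = x i" unfolding width_def by simp
  ultimately have "((\<lambda>t. quad_ref (lam (x (i - 1))) (lam (midpt i)) (lam (x i)) (?y t)
        * lift_ref (g (x (i - 1))) (g (midpt i)) (g (x i)) (?y t)) has_integral
      width i / 6 * (lam (x (i - 1)) * g (x (i - 1)) + 4 * (lam (midpt i) * g (midpt i)) + lam (x i) * g (x i)))
      {x (i - 1)..x i}"
    by simp
  then show "((\<lambda>t. lam t * lift g t) has_integral
      width i / 6 * (lam (x (i - 1)) * g (x (i - 1)) + 4 * (lam (midpt i) * g (midpt i)) + lam (x i) * g (x i)))
      {x (i - 1)..x i}"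
  proof (rule has_integral_spike_finite[of "{}", rotated 2])
    fix t assume "t \<in> {x (i - 1)..x i} - {}"
    then show "lam t * lift g t = quad_ref (lam (x (i - 1))) (lam (midpt i)) (lam (x i)) (?y t)
        * lift_ref (g (x (i - 1))) (g (midpt i)) (g (x i)) (?y t)"
      using spline_2_0_on_element[OF assms i, of t] lift_on_element[OF i, of t g]
      unfolding lift_on_def by simp
  qed simp
qed

lemma lift'_square_integral_on_element_le:
  assumes i: "i \<in> {1..M}"
  shows "integral {x (i - 1)..x i} (\<lambda>t. (lift' g t)\<^sup>2)
    \<le> 2 * 436\<^sup>2 * ((g (x (i - 1)) - g (midpt i))\<^sup>2 + (g (x i) - g (midpt i))\<^sup>2) / width i"
proof -
  define K where "K = 2 * 436\<^sup>2 * ((g (x (i - 1)) - g (midpt i))\<^sup>2 + (g (x i) - g (midpt i))\<^sup>2)"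
  have h: "0 < width i" by (rule width_pos[OF i])
  have "integral {x (i - 1)..x i} (\<lambda>t. (lift' g t)\<^sup>2) = integral {x (i - 1)..x i} (\<lambda>t. (lift_on' g i t)\<^sup>2)"
    using has_integral_eq_on_interior[of "x (i - 1)" "x i" "\<lambda>t. (lift_on' g i t)\<^sup>2" "\<lambda>t. (lift' g t)\<^sup>2"]
      lift_has_derivative(2)[OF i] continuous_on_lift_on'[OF i, THEN continuous_on_power]
    by (simp add: integral_unique)
  also have "\<dots> \<le> integral {x (i - 1)..x i} (\<lambda>t. K / (width i)\<^sup>2)"
  proof (rule integral_le)
    show "(\<lambda>t. (lift_on' g i t)\<^sup>2) integrable_on {x (i - 1)..x i}"
      by (intro integrable_continuous_interval continuous_intros continuous_on_lift_on' i)
    fix t assume "t \<in> {x (i - 1)..x i}"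
    then have "0 \<le> (t - x (i - 1)) / width i" "(t - x (i - 1)) / width i \<le> 1"
      using h unfolding width_def by auto
    from lift_ref'_square_le[OF this] show "(lift_on' g i t)\<^sup>2 \<le> K / (width i)\<^sup>2"
      unfolding lift_on'_def K_def power_divide by (intro divide_right_mono) auto
  qed (rule integrable_const_ivl)
  also have "\<dots> = K / width i"
    using h unfolding width_def by (simp add: power2_eq_square)
  finally show ?thesis unfolding K_def .
qed

end

section \<open>The discrete pairing with a product of derivatives\<close>

(* 1744 = 4 * 436, and 436 bounds quartic_left' and quartic_right' on [0,1]. *)
definition lipschitz_const :: "real \<Rightarrow> real \<Rightarrow> nat \<Rightarrow> real" where
  "lipschitz_const a b d = 1744 * sqrt (real d * (b - a) * (1 + (b - a)\<^sup>2))"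

lemma lipschitz_const_pos:
  assumes "a < b"
  shows "0 < lipschitz_const a b CARD('d::finite)"
  using assms unfolding lipschitz_const_def by (simp add: add_pos_nonneg)

context mesh
begin

(* S31D with the condition v a = 0 dropped: the estimate never uses it. *)
definition clamped :: "nat \<Rightarrow> (real \<Rightarrow> real) \<Rightarrow> bool" where
  "clamped n v \<longleftrightarrow> spline n 1 M x v \<and> Dv a b v a = 0 \<and> Dv a b v b = 0"

definition grad_inner :: "('d::finite \<Rightarrow> real \<Rightarrow> real) \<Rightarrow> ('d \<Rightarrow> real \<Rightarrow> real) \<Rightarrow> real \<Rightarrow> real" where
  "grad_inner p q t = (\<Sum>k\<in>UNIV. Dv a b (p k) t * Dv a b (q k) t)"

definition h2_seminorm_sq :: "real \<Rightarrow> real \<Rightarrow> ('d::finite \<Rightarrow> real \<Rightarrow> real) \<Rightarrow> real" where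
  "h2_seminorm_sq c d p = (\<Sum>k\<in>UNIV. curvature_energy c d (p k))"

lemma h2_seminorm_sq_nonneg:
  assumes "\<And>k. spline n 1 M x (p k)" "a \<le> c" "c \<le> d" "d \<le> b"
  shows "0 \<le> h2_seminorm_sq c d p"
  unfolding h2_seminorm_sq_def using assms by (intro sum_nonneg curvature_energy_nonneg)

lemma h2_seminorm_sq_sum_elements:
  assumes "\<And>k. spline n 1 M x (p k)"
  shows "h2_seminorm_sq a b p = (\<Sum>i=1..M. h2_seminorm_sq (x (i - 1)) (x i) p)"
  unfolding h2_seminorm_sq_def curvature_energy_def
  by (subst sum.swap) (simp add: integral_sum_elements[OF Dv_Dv_square_integrable[OF assms]])

lemma h2_seminorm_sq_le_H2norm:
  assumes "\<And>k. spline n 1 M x (p k)"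
  shows "h2_seminorm_sq a b p \<le> (H2norm a b p)\<^sup>2" and "0 \<le> H2norm a b p"
proof -
  have le: "curvature_energy a b (p k)
      \<le> integral {a..b} (\<lambda>t. (p k t)\<^sup>2 + (Dv a b (p k) t)\<^sup>2 + (Dv a b (Dv a b (p k)) t)\<^sup>2)" for k
    unfolding curvature_energy_def
  proof (rule integral_le)
    have "(\<lambda>t. (p k t)\<^sup>2 + (Dv a b (p k) t)\<^sup>2) integrable_on {a..b}"
      using spline_1_continuous[OF assms] continuous_on_Dv[OF assms]
      by (intro integrable_continuous_interval continuous_intros)
    then show "(\<lambda>t. (p k t)\<^sup>2 + (Dv a b (p k) t)\<^sup>2 + (Dv a b (Dv a b (p k)) t)\<^sup>2) integrable_on {a..b}"
      using Dv_Dv_square_integrable[OF assms] by (rule integrable_add)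
  qed (use Dv_Dv_square_integrable[OF assms] in auto)
  then have "h2_seminorm_sq a b p \<le> (\<Sum>k\<in>UNIV. integral {a..b}
      (\<lambda>t. (p k t)\<^sup>2 + (Dv a b (p k) t)\<^sup>2 + (Dv a b (Dv a b (p k)) t)\<^sup>2))"
    unfolding h2_seminorm_sq_def by (rule sum_mono)
  moreover have "0 \<le> h2_seminorm_sq a b p"
    using assms left_less_right by (intro h2_seminorm_sq_nonneg) auto
  ultimately show "h2_seminorm_sq a b p \<le> (H2norm a b p)\<^sup>2" "0 \<le> H2norm a b p"
    unfolding H2norm_def by auto
qed

lemma h2_seminorm_sq_cross_sum_elements:
  assumes "\<And>k. spline n 1 M x (p k)" "\<And>k. spline n 1 M x (q k)"
  shows "(\<Sum>i=1..M. h2_seminorm_sq (x (i - 1)) (x i) p * h2_seminorm_sq a b q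
      + h2_seminorm_sq a b p * h2_seminorm_sq (x (i - 1)) (x i) q)
    = 2 * h2_seminorm_sq a b p * h2_seminorm_sq a b q"
  using h2_seminorm_sq_sum_elements[of n p, OF assms(1)] h2_seminorm_sq_sum_elements[of n q, OF assms(2)]
  by (simp add: sum.distrib flip: sum_distrib_left sum_distrib_right)

lemma Dv_square_le:
  assumes "spline k 1 M x v" "Dv a b v a = 0" "s \<in> {a..b}"
  shows "(Dv a b v s)\<^sup>2 \<le> (b - a) * curvature_energy a b v"
  using Dv_increment_square_le[OF assms(1), of a b a s] assms left_less_right by simp

lemma Dv_mult_increment_square_le:
  assumes u: "spline k 1 M x u" "Dv a b u a = 0" and v: "spline k 1 M x v" "Dv a b v a = 0"
    and i: "i \<in> {1..M}" and s: "s \<in> {x (i - 1)..x i}" and s': "s' \<in> {x (i - 1)..x i}"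
  shows "(Dv a b u s * Dv a b v s - Dv a b u s' * Dv a b v s')\<^sup>2
    \<le> 2 * width i * (b - a) * (curvature_energy (x (i - 1)) (x i) u * curvature_energy a b v
      + curvature_energy a b u * curvature_energy (x (i - 1)) (x i) v)"
proof -
  have in_ab: "s \<in> {a..b}" "s' \<in> {a..b}" and elem_ab: "a \<le> x (i - 1)" "x i \<le> b"
    using element_subset[OF i] s s' node_less_next[OF i] by auto
  define X Y where "X = (Dv a b u s - Dv a b u s') * Dv a b v s"
    and "Y = Dv a b u s' * (Dv a b v s - Dv a b v s')"
  have "X\<^sup>2 \<le> (width i * curvature_energy (x (i - 1)) (x i) u) * ((b - a) * curvature_energy a b v)"
    unfolding X_def power_mult_distrib width_def
    using Dv_increment_square_le[OF u(1) elem_ab s' s] Dv_square_le[OF v in_ab(1)]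
      curvature_energy_nonneg[OF u(1) elem_ab(1) _ elem_ab(2)] node_less_next[OF i]
    by (intro mult_mono) auto
  moreover have "Y\<^sup>2 \<le> ((b - a) * curvature_energy a b u) * (width i * curvature_energy (x (i - 1)) (x i) v)"
    unfolding Y_def power_mult_distrib width_def
    using Dv_increment_square_le[OF v(1) elem_ab s' s] Dv_square_le[OF u in_ab(2)]
      curvature_energy_nonneg[OF u(1), of a b] left_less_right
    by (intro mult_mono) auto
  moreover have "(X + Y)\<^sup>2 \<le> 2 * X\<^sup>2 + 2 * Y\<^sup>2"
    using sum_squares_bound[of X Y] by (simp add: power2_sum)
  moreover have "Dv a b u s * Dv a b v s - Dv a b u s' * Dv a b v s' = X + Y"
    unfolding X_def Y_def by (simp add: algebra_simps)
  ultimately show ?thesis by (simp add: algebra_simps)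
qed

lemma grad_inner_increment_square_le:
  fixes p q :: "'d::finite \<Rightarrow> real \<Rightarrow> real"
  assumes p: "\<And>k. clamped n (p k)" and q: "\<And>k. clamped n (q k)" and i: "i \<in> {1..M}"
    and s: "s \<in> {x (i - 1)..x i}" and s': "s' \<in> {x (i - 1)..x i}"
  shows "(grad_inner p q s - grad_inner p q s')\<^sup>2 \<le> 2 * real CARD('d) * width i * (b - a) *
    (h2_seminorm_sq (x (i - 1)) (x i) p * h2_seminorm_sq a b q
     + h2_seminorm_sq a b p * h2_seminorm_sq (x (i - 1)) (x i) q)"
proof -
  define E where "E v = curvature_energy (x (i - 1)) (x i) v" for v
  define D where "D k = Dv a b (p k) s * Dv a b (q k) s - Dv a b (p k) s' * Dv a b (q k) s'" for k
  have sp: "spline n 1 M x (p k)" "spline n 1 M x (q k)" "Dv a b (p k) a = 0" "Dv a b (q k) a = 0" for k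
    using p[of k] q[of k] unfolding clamped_def by auto
  have E_nonneg: "0 \<le> E (p k)" "0 \<le> E (q k)" for k
    unfolding E_def using sp node_less_next[OF i] element_subset[OF i]
    by (auto intro!: curvature_energy_nonneg)
  have energy_le: "curvature_energy a b (p k) \<le> h2_seminorm_sq a b p"
      "curvature_energy a b (q k) \<le> h2_seminorm_sq a b q" for k
    unfolding h2_seminorm_sq_def using sp left_less_right
    by (auto intro!: member_le_sum curvature_energy_nonneg)
  have "(grad_inner p q s - grad_inner p q s')\<^sup>2 = (\<Sum>k\<in>UNIV. D k * 1)\<^sup>2"
    unfolding grad_inner_def D_def by (simp add: sum_subtractf)
  also have "\<dots> \<le> real CARD('d) * (\<Sum>k\<in>UNIV. (D k)\<^sup>2)"
    using Cauchy_Schwarz_ineq_sum[of D "\<lambda>_. 1" UNIV] by (simp add: mult.commute)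
  also have "\<dots> \<le> real CARD('d) * (\<Sum>k\<in>UNIV. 2 * width i * (b - a) *
      (E (p k) * h2_seminorm_sq a b q + h2_seminorm_sq a b p * E (q k)))"
  proof (intro mult_left_mono sum_mono)
    fix k
    have "(D k)\<^sup>2 \<le> 2 * width i * (b - a) * (E (p k) * curvature_energy a b (q k)
        + curvature_energy a b (p k) * E (q k))"
      unfolding D_def E_def by (rule Dv_mult_increment_square_le[OF sp(1,3) sp(2,4) i s s'])
    also have "\<dots> \<le> 2 * width i * (b - a) * (E (p k) * h2_seminorm_sq a b q + h2_seminorm_sq a b p * E (q k))"
      using width_pos[OF i] left_less_right E_nonneg[of k] energy_le[of k]
      by (intro mult_left_mono add_mono mult_right_mono) auto
    finally show "(D k)\<^sup>2 \<le> \<dots>" .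
  qed simp
  also have "\<dots> = 2 * real CARD('d) * width i * (b - a) *
      (h2_seminorm_sq (x (i - 1)) (x i) p * h2_seminorm_sq a b q
       + h2_seminorm_sq a b p * h2_seminorm_sq (x (i - 1)) (x i) q)"
    unfolding h2_seminorm_sq_def[of "x (i - 1)"] E_def
    by (simp add: sum.distrib ac_simps flip: sum_distrib_left sum_distrib_right)
  finally show ?thesis .
qed

lemma grad_inner_at_ends:
  assumes "\<And>k. clamped n (p k)"
  shows "grad_inner p q a = 0" "grad_inner p q b = 0"
  using assms unfolding grad_inner_def clamped_def by auto

lemma lift_grad_inner_is_H10:
  assumes "\<And>k. clamped n (p k)"
  shows "is_H10 a b (lift (grad_inner p q)) (lift' (grad_inner p q))"
  using grad_inner_at_ends[of n p q, OF assms] by (rule lift_is_H10)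

lemma lift'_square_integral_le:
  fixes p q :: "'d::finite \<Rightarrow> real \<Rightarrow> real"
  assumes p: "\<And>k. clamped n (p k)" and q: "\<And>k. clamped n (q k)"
  shows "integral {a..b} (\<lambda>t. (lift' (grad_inner p q) t)\<^sup>2)
    \<le> 1744\<^sup>2 * real CARD('d) * (b - a) * h2_seminorm_sq a b p * h2_seminorm_sq a b q"
proof -
  define g where "g = grad_inner p q"
  define P Q where "P = h2_seminorm_sq a b p" and "Q = h2_seminorm_sq a b q"
  define W where "W i = h2_seminorm_sq (x (i - 1)) (x i) p * Q + P * h2_seminorm_sq (x (i - 1)) (x i) q" for i
  define C where "C = 2 * real CARD('d) * (b - a)"
  have spline: "spline n 1 M x (p k)" "spline n 1 M x (q k)" for k
    using p q unfolding clamped_def by auto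
  have "(\<lambda>t. (lift' g t)\<^sup>2) integrable_on {a..b}"
    using lift_grad_inner_is_H10[of n p q, OF p] unfolding g_def is_H10_def by blast
  then have "integral {a..b} (\<lambda>t. (lift' g t)\<^sup>2) = (\<Sum>i=1..M. integral {x (i - 1)..x i} (\<lambda>t. (lift' g t)\<^sup>2))"
    by (rule integral_sum_elements)
  also have "\<dots> \<le> (\<Sum>i=1..M. 2 * 436\<^sup>2 * (2 * C * W i))"
  proof (rule sum_mono)
    fix i assume i: "i \<in> {1..M}"
    have osc: "(g s - g (midpt i))\<^sup>2 \<le> C * width i * W i" if "s \<in> {x (i - 1)..x i}" for s
      using grad_inner_increment_square_le[of n p q, OF p q i that midpt_in_element[OF i]]
      unfolding g_def C_def W_def P_def Q_def by (simp add: ac_simps)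
    have "integral {x (i - 1)..x i} (\<lambda>t. (lift' g t)\<^sup>2)
        \<le> 2 * 436\<^sup>2 * ((g (x (i - 1)) - g (midpt i))\<^sup>2 + (g (x i) - g (midpt i))\<^sup>2) / width i"
      by (rule lift'_square_integral_on_element_le[OF i])
    also have "\<dots> \<le> 2 * 436\<^sup>2 * (2 * C * width i * W i) / width i"
      using osc[of "x (i - 1)"] osc[of "x i"] node_less_next[OF i] width_pos[OF i]
      by (intro divide_right_mono mult_left_mono) auto
    also have "\<dots> = 2 * 436\<^sup>2 * (2 * C * W i)"
      using width_pos[OF i] by simp
    finally show "integral {x (i - 1)..x i} (\<lambda>t. (lift' g t)\<^sup>2) \<le> 2 * 436\<^sup>2 * (2 * C * W i)" .
  qed
  also have "\<dots> = 4 * 436\<^sup>2 * C * (\<Sum>i=1..M. W i)"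
    by (simp flip: sum_distrib_left)
  also have "(\<Sum>i=1..M. W i) = 2 * P * Q"
    unfolding W_def P_def Q_def using spline by (rule h2_seminorm_sq_cross_sum_elements)
  finally show ?thesis unfolding g_def C_def P_def Q_def by (simp add: algebra_simps)
qed

lemma lift_H1norm_w_le:
  fixes p q :: "'d::finite \<Rightarrow> real \<Rightarrow> real"
  assumes p: "\<And>k. clamped n (p k)" and q: "\<And>k. clamped n (q k)"
  shows "H1norm_w a b (lift (grad_inner p q)) (lift' (grad_inner p q))
    \<le> lipschitz_const a b CARD('d) * H2norm a b p * H2norm a b q"
proof -
  define g where "g = grad_inner p q"
  define X where "X = real CARD('d) * (b - a) * (1 + (b - a)\<^sup>2)"
  define P Q where "P = h2_seminorm_sq a b p" and "Q = h2_seminorm_sq a b q"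
  have spline_p: "\<And>k. spline n 1 M x (p k)" and spline_q: "\<And>k. spline n 1 M x (q k)"
    using p q unfolding clamped_def by auto
  note H = lift_grad_inner_is_H10[of n p q, OF p, folded g_def]
  have "0 \<le> X" unfolding X_def using left_less_right by simp
  then have sqrt_X: "(1744 * sqrt X)\<^sup>2 = 1744\<^sup>2 * X" "0 \<le> 1744 * sqrt X"
    by (simp_all add: power_mult_distrib)
  have P: "0 \<le> P" "P \<le> (H2norm a b p)\<^sup>2" "0 \<le> H2norm a b p"
    unfolding P_def using h2_seminorm_sq_nonneg[of n p a b, OF spline_p] left_less_right
      h2_seminorm_sq_le_H2norm[of n p, OF spline_p] by auto
  have Q: "0 \<le> Q" "Q \<le> (H2norm a b q)\<^sup>2" "0 \<le> H2norm a b q"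
    unfolding Q_def using h2_seminorm_sq_nonneg[of n q a b, OF spline_q] left_less_right
      h2_seminorm_sq_le_H2norm[of n q, OF spline_q] by auto
  have poincare: "integral {a..b} (\<lambda>t. (lift g t)\<^sup>2) \<le> (b - a)\<^sup>2 * integral {a..b} (\<lambda>t. (lift' g t)\<^sup>2)"
    using left_less_right by (intro is_H10_poincare[OF _ H]) simp
  have "(H1norm_w a b (lift g) (lift' g))\<^sup>2
      = integral {a..b} (\<lambda>t. (lift g t)\<^sup>2) + integral {a..b} (\<lambda>t. (lift' g t)\<^sup>2)"
    by (rule H1norm_w_square(1)[OF H])
  also have "\<dots> \<le> (1 + (b - a)\<^sup>2) * integral {a..b} (\<lambda>t. (lift' g t)\<^sup>2)"
    using poincare by (simp add: distrib_right)
  also have "\<dots> \<le> (1 + (b - a)\<^sup>2) * (1744\<^sup>2 * real CARD('d) * (b - a) * P * Q)"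
    using lift'_square_integral_le[of n p q, OF p q] unfolding g_def P_def Q_def
    by (rule mult_left_mono) simp
  also have "\<dots> = 1744\<^sup>2 * X * (P * Q)"
    unfolding X_def by (simp only: ac_simps)
  also have "\<dots> \<le> 1744\<^sup>2 * X * ((H2norm a b p)\<^sup>2 * (H2norm a b q)\<^sup>2)"
    using P Q \<open>0 \<le> X\<close> by (intro mult_left_mono mult_mono) auto
  also have "\<dots> = (1744 * sqrt X * H2norm a b p * H2norm a b q)\<^sup>2"
    unfolding sqrt_X(1)[symmetric] by (simp only: power_mult_distrib)
  finally have "(H1norm_w a b (lift g) (lift' g))\<^sup>2 \<le> (1744 * sqrt X * H2norm a b p * H2norm a b q)\<^sup>2" .
  moreover have "0 \<le> 1744 * sqrt X * H2norm a b p * H2norm a b q"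
    using sqrt_X(2) P(3) Q(3) by simp
  ultimately show ?thesis unfolding g_def lipschitz_const_def X_def[symmetric] by (rule power2_le_imp_le)
qed

lemma simpson_sum_grad_inner_le:
  fixes p q :: "'d::finite \<Rightarrow> real \<Rightarrow> real"
  assumes lam: "spline 2 0 M x lam" and p: "\<And>k. clamped n (p k)" and q: "\<And>k. clamped n (q k)"
  shows "\<bar>simpson_sum (\<lambda>t. lam t * grad_inner p q t)\<bar>
    \<le> lipschitz_const a b CARD('d) * H2norm a b p * H2norm a b q * Hm1norm a b lam"
proof -
  define g where "g = grad_inner p q"
  have lam_cont: "continuous_on {a..b} lam" by (rule spline_0_continuous[OF lam])
  have "simpson_sum (\<lambda>t. lam t * g t) = integral {a..b} (\<lambda>t. lam t * lift g t)"
    by (rule integral_unique[OF has_integral_times_lift[OF lam], symmetric])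
  also have "\<bar>\<dots>\<bar> \<le> H1norm_w a b (lift g) (lift' g) * Hm1norm a b lam"
    by (rule abs_integral_mult_le_H1norm_w_Hm1norm[OF left_less_right lam_cont lift_grad_inner_is_H10[of n p q, OF p, folded g_def]])
  also have "\<dots> \<le> lipschitz_const a b CARD('d) * H2norm a b p * H2norm a b q * Hm1norm a b lam"
    using lift_H1norm_w_le[of n p q, OF p q] Hm1norm_nonneg[OF left_less_right lam_cont]
    unfolding g_def by (rule mult_right_mono)
  finally show ?thesis unfolding g_def .
qed

section \<open>The linearised discrete Lagrangian\<close>

lemma S31D_clamped: "S31D M x v \<Longrightarrow> clamped 3 v"
  unfolding S31D_def clamped_def by simp

lemma S20_0_spline: "S20_0 M x v \<Longrightarrow> spline 2 0 M x v"
  unfolding S20_0_def by simp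

lemma b_form_eq_simpson_sum: "b_form M x u v eta = simpson_sum (\<lambda>t. eta t * grad_inner u v t)"
  unfolding b_form_def dip_eq_simpson_sum grad_inner_def by simp

lemma a_form_eq_simpson_sum:
  "a_form M x lam v w = (\<Sum>k\<in>UNIV. integral {a..b} (\<lambda>t. Dv a b (Dv a b (v k)) t * Dv a b (Dv a b (w k)) t))
    + simpson_sum (\<lambda>t. lam t * grad_inner v w t)"
  unfolding a_form_def dip_eq_simpson_sum grad_inner_def by simp

lemma grad_inner_diff:
  assumes "\<And>k. spline n 1 M x (u1 k)" "\<And>k. spline n 1 M x (u2 k)" "t \<in> {a..b}"
  shows "grad_inner u1 q t - grad_inner u2 q t = grad_inner (\<lambda>k t. u1 k t - u2 k t) q t"
proof -
  have diff: "Dv a b (\<lambda>t. u1 k t - u2 k t) t = Dv a b (u1 k) t - Dv a b (u2 k) t" for k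
    using Dv_diff[OF assms(1)[of k] assms(2)[of k] assms(3)] .
  show ?thesis
    unfolding grad_inner_def sum_subtractf[symmetric] by (simp add: diff left_diff_distrib)
qed

lemma DF_diff_eq:
  assumes "\<And>k. spline n 1 M x (u1 k)" "\<And>k. spline n 1 M x (u2 k)"
  shows "DF M x u1 lam1 v mu w eta - DF M x u2 lam2 v mu w eta
    = simpson_sum (\<lambda>t. (lam1 t - lam2 t) * grad_inner v w t)
      + simpson_sum (\<lambda>t. mu t * grad_inner (\<lambda>k t. u1 k t - u2 k t) w t)
      + simpson_sum (\<lambda>t. eta t * grad_inner (\<lambda>k t. u1 k t - u2 k t) v t)"
proof -
  have split: "simpson_sum (\<lambda>t. f t * grad_inner u1 q t) - simpson_sum (\<lambda>t. f t * grad_inner u2 q t)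
      = simpson_sum (\<lambda>t. f t * grad_inner (\<lambda>k t. u1 k t - u2 k t) q t)" for f and q :: "'a \<Rightarrow> real \<Rightarrow> real"
    unfolding simpson_sum_diff[symmetric]
    by (rule simpson_sum_cong) (simp add: grad_inner_diff[OF assms, symmetric] algebra_simps)
  have "simpson_sum (\<lambda>t. lam1 t * grad_inner v w t) - simpson_sum (\<lambda>t. lam2 t * grad_inner v w t)
      = simpson_sum (\<lambda>t. (lam1 t - lam2 t) * grad_inner v w t)"
    unfolding simpson_sum_diff[symmetric] by (simp add: algebra_simps)
  with split[of mu w] split[of eta v] show ?thesis
    unfolding DF_def a_form_eq_simpson_sum b_form_eq_simpson_sum by linarith
qed

lemma three_products_le:
  fixes e l v m w n :: real
  assumes "0 \<le> e" "0 \<le> l" "0 \<le> v" "0 \<le> m" "0 \<le> w" "0 \<le> n"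
  shows "v * w * l + e * w * m + e * v * n \<le> (e + l) * (v + m) * (w + n)"
proof -
  have "(e + l) * (v + m) * (w + n)
      = v * w * l + e * w * m + e * v * n + (e * v * w + e * m * n + l * v * n + l * m * w + l * m * n)"
    by (simp add: algebra_simps)
  moreover have "0 \<le> e * v * w + e * m * n + l * v * n + l * m * w + l * m * n"
    using assms by (intro add_nonneg_nonneg mult_nonneg_nonneg)
  ultimately show ?thesis by linarith
qed

lemma DF_diff_le:
  fixes u1 u2 v w :: "'d::finite \<Rightarrow> real \<Rightarrow> real"
  assumes u1: "\<And>k. spline 3 1 M x (u1 k)" and u2: "\<And>k. spline 3 1 M x (u2 k)"
    and e: "\<And>k. S31D M x (\<lambda>t. u1 k t - u2 k t)"
    and lam1: "S20_0 M x lam1" and lam2: "S20_0 M x lam2"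
    and v: "\<And>k. S31D M x (v k)" and mu: "S20_0 M x mu"
    and w: "\<And>k. S31D M x (w k)" and eta: "S20_0 M x eta"
  shows "\<bar>DF M x u1 lam1 v mu w eta - DF M x u2 lam2 v mu w eta\<bar>
    \<le> lipschitz_const a b CARD('d)
      * (H2norm a b (\<lambda>k t. u1 k t - u2 k t) + Hm1norm a b (\<lambda>t. lam1 t - lam2 t))
      * Xnorm a b v mu * Xnorm a b w eta"
proof -
  define E where "E = (\<lambda>k t. u1 k t - u2 k t)"
  define C where "C = lipschitz_const a b CARD('d)"
  have cE: "\<And>k. clamped 3 (E k)" and cv: "\<And>k. clamped 3 (v k)" and cw: "\<And>k. clamped 3 (w k)"
    using e v w unfolding E_def by (auto intro: S31D_clamped)
  have lam: "spline 2 0 M x (\<lambda>t. lam1 t - lam2 t)"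
    using lam1 lam2 by (intro spline_0_diff S20_0_spline)
  have H2_nonneg: "0 \<le> H2norm a b p" if "\<And>k. clamped 3 (p k)" for p :: "'d \<Rightarrow> real \<Rightarrow> real"
    using that unfolding clamped_def by (intro h2_seminorm_sq_le_H2norm(2)[of 3]) auto
  have Hm1_nonneg: "0 \<le> Hm1norm a b l" if "spline 2 0 M x l" for l
    using left_less_right spline_0_continuous[OF that] by (rule Hm1norm_nonneg)
  have "\<bar>DF M x u1 lam1 v mu w eta - DF M x u2 lam2 v mu w eta\<bar>
      \<le> \<bar>simpson_sum (\<lambda>t. (lam1 t - lam2 t) * grad_inner v w t)\<bar>
        + \<bar>simpson_sum (\<lambda>t. mu t * grad_inner E w t)\<bar> + \<bar>simpson_sum (\<lambda>t. eta t * grad_inner E v t)\<bar>"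
    unfolding DF_diff_eq[of 3 u1 u2, OF u1 u2] E_def by linarith
  also have "\<dots> \<le> C * H2norm a b v * H2norm a b w * Hm1norm a b (\<lambda>t. lam1 t - lam2 t)
      + C * H2norm a b E * H2norm a b w * Hm1norm a b mu + C * H2norm a b E * H2norm a b v * Hm1norm a b eta"
    unfolding C_def
    using simpson_sum_grad_inner_le[of _ 3 v w, OF lam cv cw]
      simpson_sum_grad_inner_le[of _ 3 E w, OF S20_0_spline[OF mu] cE cw]
      simpson_sum_grad_inner_le[of _ 3 E v, OF S20_0_spline[OF eta] cE cv]
    by (intro add_mono)
  also have "\<dots> \<le> C * ((H2norm a b E + Hm1norm a b (\<lambda>t. lam1 t - lam2 t))
      * (H2norm a b v + Hm1norm a b mu) * (H2norm a b w + Hm1norm a b eta))"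
  proof -
    have "0 \<le> C" unfolding C_def by (rule less_imp_le[OF lipschitz_const_pos[OF left_less_right]])
    with three_products_le[OF H2_nonneg[of E, OF cE] Hm1_nonneg[OF lam] H2_nonneg[of v, OF cv]
        Hm1_nonneg[OF S20_0_spline[OF mu]] H2_nonneg[of w, OF cw] Hm1_nonneg[OF S20_0_spline[OF eta]]]
    show ?thesis by (simp add: distrib_left[symmetric] mult.assoc mult_left_mono)
  qed
  finally show ?thesis unfolding C_def E_def Xnorm_def by (simp only: ac_simps)
qed

end

theorem mainTheorem9:
  fixes a b c0 :: real
  assumes "a < b"
  shows "\<exists>c>0. \<forall>M x. is_mesh a b M x \<and> quasi_uniform c0 M x \<longrightarrow>
    (\<forall>(u1 :: 'd::finite \<Rightarrow> real \<Rightarrow> real) u2 lam1 lam2 v mu w eta.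
       (\<forall>k. spline 3 1 M x (u1 k)) \<and> (\<forall>k. spline 3 1 M x (u2 k))
     \<and> (\<forall>k. S31D M x (\<lambda>t. u1 k t - u2 k t))
     \<and> S20_0 M x lam1 \<and> S20_0 M x lam2
     \<and> (\<forall>k. S31D M x (v k)) \<and> S20_0 M x mu
     \<and> (\<forall>k. S31D M x (w k)) \<and> S20_0 M x eta
     \<longrightarrow> \<bar>DF M x u1 lam1 v mu w eta - DF M x u2 lam2 v mu w eta\<bar>
         \<le> c * (H2norm a b (\<lambda>k t. u1 k t - u2 k t) + Hm1norm a b (\<lambda>t. lam1 t - lam2 t))
             * Xnorm a b v mu * Xnorm a b w eta)"
proof (intro exI[of _ "lipschitz_const a b CARD('d)"] conjI allI impI)
  show "0 < lipschitz_const a b CARD('d)" by (rule lipschitz_const_pos[OF assms])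
qed (auto intro!: mesh.DF_diff_le simp: mesh_def)

end
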